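(* Let $\Sigma$ be a non-empty set of labels containing a distinguished element $\tau$. The category of cubes $\widehat{\square}$ (consisting of all adjacency-preserving maps) is the only category of cubes $\mathcal{A}$ such that for every $n\geq 1$ and every $(a_1,\dots,a_n)\in\Sigma^n$ there is an isomorphism of labelled $\mathcal{A}$-sets \[\mathcal{L}_\mathcal{A}\big(\mathrm{COSK}^\Sigma(\square[a_1,\dots,a_n]_{\leq 1})\big)\cong \mathrm{cosk}_1^{\mathcal{A},\Sigma}(\mathcal{A}[a_1,\dots,a_n]_{\leq 1})\] (and both are then isomorphic to $\mathcal{A}[a_1,\dots,a_n]$).
   Context: Cubes: $[0]=\{()\}$ and $[n]=\{0,1\}^n$ ($n\ge1$) with the product order. ${\rm PoSet}$ denotes posets with strictly increasing maps. Face maps $\delta_i^\alpha:[n-1]\to[n]$ ($1\le i\le n$, $\alpha\in\{0,1\}$) insert $\alpha$ at position $i$. The reduced box category $\square$ is the subcategory of ${\rm PoSet}$ with objects $[n]$, $n\ge 0$, generated by the face maps. The distance on $[n]$ is $d(\epsilon,\epsilon')=\sum_i|\epsilon_i-\epsilon'_i|$; a map $f:[m]\to[n]$ is adjacency-preserving if it is strictly increasing and $d(x,y)=1$ implies $d(f(x),f(y))=1$. A category of cubes is a subcategory $\mathcal{A}$ of ${\rm PoSet}$ with object set $\{[n]:n\ge0\}$, containing $\square$, all of whose morphisms are adjacency-preserving; $\widehat\square$ is the category of cubes of all adjacency-preserving maps. An $\mathcal{A}$-set is a presheaf of sets on $\mathcal{A}$ ($K_n:=K([n])$); a $\square$-set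 is a precubical set. $\mathcal{A}[p]:=\mathcal{A}(-,[p])$, $\partial\mathcal{A}[p]$ is the subpresheaf with the same $k$-cubes for $k<p$ and none in dimension $\ge p$. An $n$-dimensional $\mathcal A$-set is a presheaf on the full subcategory $\mathcal A_n$ on $[k]$, $k\le n$ (identified with $\mathcal A$-sets empty above dimension $n$), and $K_{\le n}$ is the truncation of $K$. $\omega_\mathcal{A}$ is restriction along $\square\subset\mathcal{A}$ and $\mathcal{L}_\mathcal{A}$ its left adjoint. Labels: $!\Sigma$ is the precubical set with $(!\Sigma)_0=\{()\}$, $(!\Sigma)_n=\Sigma^n$, and $\partial_i^0=\partial_i^1$ deleting the $i$-th letter. $\mathrm{sh}_\mathcal{A}$ is the left adjoint of the inclusion into $\mathcal{A}$-sets of the full subcategory of $\mathcal A$-sets $X$ orthogonal to the maps $\mathcal{A}[p]\sqcup_{\partial\mathcal{A}[p]}\mathcal{A}[p]\to\mathcal{A}[p]$, $p\ge2$ (i.e. two $p$-cubes of $X$, $p\ge2$, with the same boundary are equal). A labelled $\mathcal{A}$-set is an object of the slice category of $\mathcal{A}$-sets over $\mathrm{sh}_\mathcal{A}\mathcal{L}_\mathcal{A}(!\Sigma)$; for $\mathcal A=\square$ this is a precubical set over $!\Sigma$ (labelled precubical set). $\mathcal L_\mathcal A$ sends a labelled precubical set $K\to!\Sigma$ to $\mathcal L_\mathcal A(K)\to\mathcal L_\mathcal A(!\Sigma)\to\mathrm{sh}_\mathcal A\mathcal L_\mathcal A(!\Sigma)$. $\square[a_1,\dots,a_n]$ is $\square[n]\to!\Sigma$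 sending $\mathrm{id}_{[n]}$ to $(a_1,\dots,a_n)$, and $\mathcal{A}[a_1,\dots,a_n]:=\mathcal{L}_\mathcal{A}(\square[a_1,\dots,a_n])$. $\mathrm{cosk}_1^{\mathcal{A},\Sigma}$ is the right adjoint of the truncation functor $K\mapsto K_{\le 1}$ from labelled $\mathcal{A}$-sets to labelled $1$-dimensional $\mathcal{A}$-sets (over $\mathrm{sh}_\mathcal{A}\mathcal{L}_\mathcal{A}(!\Sigma)$). Labelled directed coskeleton: let $K$ be a $1$-dimensional labelled precubical set with $K_0$ identified with $[p]$. For an $n$-cube $x$ of $\mathrm{cosk}_1^{\square,\Sigma}(K)$ let $x_0:[n]\cong\square([0],[n])\to K_0=[p]$ be the induced map on $0$-cubes. A map $[n]\to[p]$ is non-twisted if it is a composite $\psi\circ\phi$ with $\psi:[q]\to[p]$ in $\square$ and $\phi:[n]\to[q]$ of the form $(\epsilon_1,\dots,\epsilon_n)\mapsto(\epsilon_{i_1},\dots,\epsilon_{i_q})$ with $\{1,\dots,n\}\subset\{i_1,\dots,i_q\}$ and such that, reading left to right, the first occurrence of $\epsilon_i$ precedes the first occurrence of $\epsilon_{i+1}$ for each $i$. $\mathrm{COSK}^\Sigma(K)$ is the labelled sub-precubical set of $\mathrm{cosk}_1^{\square,\Sigma}(K)$ with the same cubes in dimensions $\le1$ and whose $n$-cubes, $n\ge2$, are those $x$ with $x_0$ non-twisted. *)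

theory Defs
  imports Main
begin

text \<open>A vertex of the cube [n] is a boolean list of length n (False = 0, True = 1).
  A map [m] -> [n] is encoded as a triple (m, n, g); g is normalised to be
  undefined outside the vertices of [m], so that equality of maps is extensional.\<close>

type_synonym vert = "bool list"
type_synonym cmap = "nat \<times> nat \<times> (vert \<Rightarrow> vert)"

definition cube :: "nat \<Rightarrow> vert set" where
  "cube n = {v. length v = n}"

definition dom_c :: "cmap \<Rightarrow> nat" where "dom_c f = fst f"
definition cod_c :: "cmap \<Rightarrow> nat" where "cod_c f = fst (snd f)"
definition fun_c :: "cmap \<Rightarrow> vert \<Rightarrow> vert" where "fun_c f = snd (snd f)"

definition mk_map :: "nat \<Rightarrow> nat \<Rightarrow> (vert \<Rightarrow> vert) \<Rightarrow> cmap" where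
  "mk_map m n g = (m, n, \<lambda>v. if length v = m then g v else undefined)"

definition wf_map :: "cmap \<Rightarrow> bool" where
  "wf_map f \<longleftrightarrow> (\<forall>v \<in> cube (dom_c f). fun_c f v \<in> cube (cod_c f))
      \<and> f = mk_map (dom_c f) (cod_c f) (fun_c f)"

definition idc :: "nat \<Rightarrow> cmap" where
  "idc n = mk_map n n id"

definition comp_c :: "cmap \<Rightarrow> cmap \<Rightarrow> cmap" where
  "comp_c g f = mk_map (dom_c f) (cod_c g) (fun_c g \<circ> fun_c f)"

text \<open>face n i a : [n-1] -> [n] inserts a at position i (1 <= i <= n).\<close>
definition face :: "nat \<Rightarrow> nat \<Rightarrow> bool \<Rightarrow> cmap" where
  "face n i a = mk_map (n - 1) n (\<lambda>v. take (i - 1) v @ [a] @ drop (i - 1) v)"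

inductive_set box :: "cmap set" where
  box_id: "idc n \<in> box"
| box_face: "f \<in> box \<Longrightarrow> 1 \<le> i \<Longrightarrow> i \<le> n \<Longrightarrow> cod_c f = n - 1
              \<Longrightarrow> comp_c (face n i a) f \<in> box"

definition leq_v :: "vert \<Rightarrow> vert \<Rightarrow> bool" where
  "leq_v v w \<longleftrightarrow> list_all2 (\<le>) v w"

definition less_v :: "vert \<Rightarrow> vert \<Rightarrow> bool" where
  "less_v v w \<longleftrightarrow> leq_v v w \<and> v \<noteq> w"

definition dist_v :: "vert \<Rightarrow> vert \<Rightarrow> nat" where
  "dist_v v w = length (filter (\<lambda>(a, b). a \<noteq> b) (zip v w))"

definition adj_pres :: "cmap \<Rightarrow> bool" where
  "adj_pres f \<longleftrightarrow> wf_map f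
     \<and> (\<forall>x \<in> cube (dom_c f). \<forall>y \<in> cube (dom_c f). less_v x y \<longrightarrow> less_v (fun_c f x) (fun_c f y))
     \<and> (\<forall>x \<in> cube (dom_c f). \<forall>y \<in> cube (dom_c f). dist_v x y = 1 \<longrightarrow> dist_v (fun_c f x) (fun_c f y) = 1)"

definition cat_of_cubes :: "cmap set \<Rightarrow> bool" where
  "cat_of_cubes A \<longleftrightarrow> (\<forall>f \<in> A. adj_pres f) \<and> box \<subseteq> A
     \<and> (\<forall>f \<in> A. \<forall>g \<in> A. dom_c g = cod_c f \<longrightarrow> comp_c g f \<in> A)"

definition hat_box :: "cmap set" where
  "hat_box = {f. adj_pres f}"

text \<open>cells X n = the n-cubes; act X f maps cod-cubes to dom-cubes.
  A labelling is a family lab n : cells X n -> cells S n.\<close>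
record 'x psh =
  cells :: "nat \<Rightarrow> 'x set"
  act :: "cmap \<Rightarrow> 'x \<Rightarrow> 'x"

definition lps_iso :: "cmap set \<Rightarrow> 'x psh \<Rightarrow> (nat \<Rightarrow> 'x \<Rightarrow> 'l) \<Rightarrow> 'y psh \<Rightarrow> (nat \<Rightarrow> 'y \<Rightarrow> 'l) \<Rightarrow> bool" where
  "lps_iso A X lX Y lY \<longleftrightarrow> (\<exists>h :: nat \<Rightarrow> 'x \<Rightarrow> 'y.
      (\<forall>n. bij_betw (h n) (cells X n) (cells Y n))
    \<and> (\<forall>f \<in> A. \<forall>x \<in> cells X (cod_c f). h (dom_c f) (act X f x) = act Y f (h (cod_c f) x))
    \<and> (\<forall>n. \<forall>x \<in> cells X n. lY n (h n x) = lX n x))"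

definition trunc1 :: "'x psh \<Rightarrow> 'x psh" where
  "trunc1 X = X\<lparr>cells := \<lambda>k. if k \<le> 1 then cells X k else {}\<rparr>"

definition const_coord :: "cmap \<Rightarrow> nat \<Rightarrow> bool" where
  "const_coord f j \<longleftrightarrow> (\<forall>v \<in> cube (dom_c f). fun_c f v ! j = fun_c f (replicate (dom_c f) False) ! j)"

definition bang_act :: "cmap \<Rightarrow> 's list \<Rightarrow> 's list" where
  "bang_act f w = [w ! j. j \<leftarrow> [0..<cod_c f], \<not> const_coord f j]"

definition bang :: "'s set \<Rightarrow> 's list psh" where
  "bang \<Sigma> = \<lparr>cells = \<lambda>n. {w. length w = n \<and> set w \<subseteq> \<Sigma>}, act = bang_act\<rparr>"

section \<open>The left adjoint L_A (left Kan extension along box in A)\<close>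

definition LA_gen :: "cmap set \<Rightarrow> 'x psh \<Rightarrow> ((nat \<times> 'x \<times> cmap) \<times> (nat \<times> 'x \<times> cmap)) set" where
  "LA_gen A K = {((m, act K \<psi> x, \<phi>), (cod_c \<psi>, x, comp_c \<psi> \<phi>)) | m \<psi> x \<phi>.
      \<psi> \<in> box \<and> dom_c \<psi> = m \<and> x \<in> cells K (cod_c \<psi>) \<and> \<phi> \<in> A \<and> cod_c \<phi> = m}"

definition LA_rel :: "cmap set \<Rightarrow> 'x psh \<Rightarrow> ((nat \<times> 'x \<times> cmap) \<times> (nat \<times> 'x \<times> cmap)) set" where
  "LA_rel A K = (LA_gen A K \<union> (LA_gen A K)\<inverse>)\<^sup>*"

definition LA_elems :: "cmap set \<Rightarrow> 'x psh \<Rightarrow> nat \<Rightarrow> (nat \<times> 'x \<times> cmap) set" where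
  "LA_elems A K n = {(m, x, \<phi>). x \<in> cells K m \<and> \<phi> \<in> A \<and> cod_c \<phi> = m \<and> dom_c \<phi> = n}"

definition LA :: "cmap set \<Rightarrow> 'x psh \<Rightarrow> (nat \<times> 'x \<times> cmap) set psh" where
  "LA A K = \<lparr>cells = \<lambda>n. (\<lambda>t. LA_rel A K `` {t}) ` LA_elems A K n,
             act = \<lambda>f C. LA_rel A K `` ((\<lambda>(m, x, \<phi>). (m, x, comp_c \<phi> f)) ` C)\<rparr>"

section \<open>The reflection sh_A (identify p-cubes, p >= 2, with the same boundary)\<close>

inductive shrel :: "cmap set \<Rightarrow> 'x psh \<Rightarrow> nat \<Rightarrow> 'x \<Rightarrow> 'x \<Rightarrow> bool" for A X where
  sh_refl: "x \<in> cells X n \<Longrightarrow> shrel A X n x x"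
| sh_sym: "shrel A X n x y \<Longrightarrow> shrel A X n y x"
| sh_trans: "shrel A X n x y \<Longrightarrow> shrel A X n y z \<Longrightarrow> shrel A X n x z"
| sh_act: "shrel A X n x y \<Longrightarrow> f \<in> A \<Longrightarrow> cod_c f = n
             \<Longrightarrow> shrel A X (dom_c f) (act X f x) (act X f y)"
| sh_bnd: "2 \<le> p \<Longrightarrow> x \<in> cells X p \<Longrightarrow> y \<in> cells X p
             \<Longrightarrow> (\<And>f. f \<in> A \<Longrightarrow> cod_c f = p \<Longrightarrow> dom_c f < p
                     \<Longrightarrow> shrel A X (dom_c f) (act X f x) (act X f y))
             \<Longrightarrow> shrel A X p x y"

definition sh :: "cmap set \<Rightarrow> 'x psh \<Rightarrow> 'x set psh" where
  "sh A X = \<lparr>cells = \<lambda>n. (\<lambda>x. {y. shrel A X n x y}) ` cells X n,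
             act = \<lambda>f C. {z. \<exists>y \<in> C. shrel A X (dom_c f) (act X f y) z}\<rparr>"

text \<open>The base of labelled A-sets: sh_A L_A (!Sigma).\<close>
definition ShL :: "cmap set \<Rightarrow> 's set \<Rightarrow> (nat \<times> 's list \<times> cmap) set set psh" where
  "ShL A \<Sigma> = sh A (LA A (bang \<Sigma>))"

text \<open>Labelling of L_A(K) induced by a labelling lab of a precubical set K over !Sigma:
  L_A(K) -> L_A(!Sigma) -> sh_A L_A(!Sigma).\<close>
definition LA_lab :: "cmap set \<Rightarrow> 's set \<Rightarrow> (nat \<Rightarrow> 'x \<Rightarrow> 's list)
                      \<Rightarrow> nat \<Rightarrow> (nat \<times> 'x \<times> cmap) set \<Rightarrow> (nat \<times> 's list \<times> cmap) set set" where
  "LA_lab A \<Sigma> lab n C = {z. shrel A (LA A (bang \<Sigma>)) n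
       (LA_rel A (bang \<Sigma>) `` ((\<lambda>(m, x, \<phi>). (m, lab m x, \<phi>)) ` C)) z}"

definition box_cube :: "nat \<Rightarrow> cmap psh" where
  "box_cube n = \<lparr>cells = \<lambda>k. {\<phi> \<in> box. dom_c \<phi> = k \<and> cod_c \<phi> = n}, act = \<lambda>f \<phi>. comp_c \<phi> f\<rparr>"

definition box_lab :: "'s list \<Rightarrow> nat \<Rightarrow> cmap \<Rightarrow> 's list" where
  "box_lab a k \<phi> = bang_act \<phi> a"

text \<open>For a 1-dimensional labelled A-set Y (labels ly into S), the n-cubes of
  cosk_1 are pairs (u, s): s an n-cube of S and u a labelled map (A[n])_{<=1} -> Y
  over s.\<close>
definition cosk_cells :: "cmap set \<Rightarrow> 'y psh \<Rightarrow> (nat \<Rightarrow> 'y \<Rightarrow> 'l) \<Rightarrow> 'l psh \<Rightarrow> nat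
                           \<Rightarrow> ((cmap \<Rightarrow> 'y) \<times> 'l) set" where
  "cosk_cells A Y ly S n = {(u, s). s \<in> cells S n
     \<and> (\<forall>\<phi>. \<not> (\<phi> \<in> A \<and> cod_c \<phi> = n \<and> dom_c \<phi> \<le> 1) \<longrightarrow> u \<phi> = undefined)
     \<and> (\<forall>\<phi> \<in> A. cod_c \<phi> = n \<longrightarrow> dom_c \<phi> \<le> 1 \<longrightarrow>
           u \<phi> \<in> cells Y (dom_c \<phi>) \<and> ly (dom_c \<phi>) (u \<phi>) = act S \<phi> s)
     \<and> (\<forall>\<delta> \<in> A. \<forall>\<phi> \<in> A. dom_c \<delta> \<le> 1 \<longrightarrow> cod_c \<delta> = dom_c \<phi> \<longrightarrow> dom_c \<phi> \<le> 1 \<longrightarrow> cod_c \<phi> = n \<longrightarrow>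
           u (comp_c \<phi> \<delta>) = act Y \<delta> (u \<phi>))}"

definition cosk_act :: "cmap set \<Rightarrow> 'y psh \<Rightarrow> 'l psh \<Rightarrow> cmap \<Rightarrow> (cmap \<Rightarrow> 'y) \<times> 'l \<Rightarrow> (cmap \<Rightarrow> 'y) \<times> 'l" where
  "cosk_act A Y S f x = (\<lambda>\<phi>. if \<phi> \<in> A \<and> cod_c \<phi> = dom_c f \<and> dom_c \<phi> \<le> 1
                               then fst x (comp_c f \<phi>) else undefined,
                         act S f (snd x))"

definition cosk :: "cmap set \<Rightarrow> 'y psh \<Rightarrow> (nat \<Rightarrow> 'y \<Rightarrow> 'l) \<Rightarrow> 'l psh \<Rightarrow> ((cmap \<Rightarrow> 'y) \<times> 'l) psh" where
  "cosk A Y ly S = \<lparr>cells = cosk_cells A Y ly S, act = cosk_act A Y S\<rparr>"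

definition cosk_lab :: "nat \<Rightarrow> (cmap \<Rightarrow> 'y) \<times> 'l \<Rightarrow> 'l" where
  "cosk_lab n x = snd x"

definition first_occ :: "nat list \<Rightarrow> nat \<Rightarrow> nat" where
  "first_occ is i = (LEAST j. j < length is \<and> is ! j = i)"

text \<open>A map h : [n] -> [p] (given on vertices) is non-twisted.  Indices are 0-based.\<close>
definition non_twisted :: "nat \<Rightarrow> nat \<Rightarrow> (vert \<Rightarrow> vert) \<Rightarrow> bool" where
  "non_twisted n p h \<longleftrightarrow> (\<exists>\<psi> is. \<psi> \<in> box \<and> dom_c \<psi> = length is \<and> cod_c \<psi> = p
      \<and> set is = {0..<n}
      \<and> (\<forall>i. Suc i < n \<longrightarrow> first_occ is i < first_occ is (Suc i))
      \<and> (\<forall>v \<in> cube n. h v = fun_c \<psi> (map (\<lambda>i. v ! i) is)))"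

text \<open>Induced map on 0-cubes of an n-cube x of the coskeleton, using an
  identification idK of K_0 with the vertices of [p].\<close>
definition x0 :: "('y \<Rightarrow> vert) \<Rightarrow> nat \<Rightarrow> (cmap \<Rightarrow> 'y) \<times> 'l \<Rightarrow> vert \<Rightarrow> vert" where
  "x0 idK n x = (\<lambda>v. idK (fst x (mk_map 0 n (\<lambda>_. v))))"

definition COSK :: "'s set \<Rightarrow> 'y psh \<Rightarrow> (nat \<Rightarrow> 'y \<Rightarrow> 's list) \<Rightarrow> ('y \<Rightarrow> vert) \<Rightarrow> nat
                    \<Rightarrow> ((cmap \<Rightarrow> 'y) \<times> 's list) psh" where
  "COSK \<Sigma> K lK idK p = \<lparr>cells = \<lambda>n. {x \<in> cosk_cells box K lK (bang \<Sigma>) n.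
                                       n \<le> 1 \<or> non_twisted n p (x0 idK n x)},
                        act = cosk_act box K (bang \<Sigma>)\<rparr>"

text \<open>COSK^Sigma(box[a_1..a_n]_{<=1}); its 0-cubes (maps [0] -> [n]) are identified
  with vertices of [n].\<close>
definition COSK_box :: "'s set \<Rightarrow> 's list \<Rightarrow> ((cmap \<Rightarrow> cmap) \<times> 's list) psh" where
  "COSK_box \<Sigma> a = COSK \<Sigma> (trunc1 (box_cube (length a))) (box_lab a) (\<lambda>\<phi>. fun_c \<phi> []) (length a)"

end

theory Submission
  imports Defs
begin

text \<open>The \<open>n\<close>-cubes of \<open>cosk\<^sub>1\<^sup>A\<^sup>,\<^sup>\<Sigma>(A[a]\<^sub>\<le>\<^sub>1)\<close> correspond to the adjacency-preserving maps
  \<open>g : [n] \<rightarrow> [p]\<close> together with a compatible label: a map on the 1-skeleton is determined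
  by its values on vertices, and sending edges to edges forces \<open>g\<close> to preserve adjacency. The
  cubes of \<open>COSK\<^sup>\<Sigma>(\<box>[a]\<^sub>\<le>\<^sub>1)\<close> correspond in the same way to non-twisted such maps, and these lie
  in \<open>\<box>\<close>; hence \<open>COSK\<^sup>\<Sigma>(\<box>[a]\<^sub>\<le>\<^sub>1) \<cong> \<box>[a]\<close> and \<open>L\<^sub>A COSK\<^sup>\<Sigma>(\<box>[a]\<^sub>\<le>\<^sub>1) \<cong> A[a]\<close> for every
  category of cubes \<open>A\<close>, whose \<open>n\<close>-cubes are the maps \<open>[n] \<rightarrow> [p]\<close> of \<open>A\<close>. For \<open>A = \<box>\<^sup>\<wedge>\<close> all
  adjacency-preserving maps are present and both isomorphisms hold. If \<open>A\<close> misses some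
  adjacency-preserving \<open>f : [n] \<rightarrow> [p]\<close>, take the constant word \<open>\<tau>\<^sup>p\<close>: then every
  adjacency-preserving map yields an \<open>n\<close>-cube of the coskeleton, which therefore has strictly more
  \<open>n\<close>-cubes than \<open>A[\<tau>\<^sup>p]\<close>, so no isomorphism exists.\<close>

section \<open>Maps between cubes\<close>

lemma mk_map_simps [simp]:
  "dom_c (mk_map m n g) = m" "cod_c (mk_map m n g) = n"
  "fun_c (mk_map m n g) v = (if length v = m then g v else undefined)"
  by (auto simp: dom_c_def cod_c_def fun_c_def mk_map_def)

lemma in_cube [simp]: "v \<in> cube n \<longleftrightarrow> length v = n"
  by (simp add: cube_def)

lemma mk_map_cong: "(\<And>v. length v = m \<Longrightarrow> g v = g' v) \<Longrightarrow> mk_map m n g = mk_map m n g'"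
  by (auto simp: mk_map_def)

lemma wf_map_mk_map: "(\<And>v. length v = m \<Longrightarrow> length (g v) = n) \<Longrightarrow> wf_map (mk_map m n g)"
  by (auto simp: wf_map_def mk_map_def dom_c_def cod_c_def fun_c_def)

lemma length_fun_c: "wf_map f \<Longrightarrow> length v = dom_c f \<Longrightarrow> length (fun_c f v) = cod_c f"
  by (auto simp: wf_map_def)

lemma cmap_eqI:
  assumes "wf_map f" "wf_map g" "dom_c f = dom_c g" "cod_c f = cod_c g"
    and "\<And>v. length v = dom_c f \<Longrightarrow> fun_c f v = fun_c g v"
  shows "f = g"
  using assms unfolding wf_map_def by (metis mk_map_cong)

lemma comp_c_simps [simp]: "dom_c (comp_c g f) = dom_c f" "cod_c (comp_c g f) = cod_c g"
  by (auto simp: comp_c_def)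

lemma fun_c_comp_c: "length v = dom_c f \<Longrightarrow> fun_c (comp_c g f) v = fun_c g (fun_c f v)"
  by (simp add: comp_c_def)

lemma wf_map_comp_c: "wf_map g \<Longrightarrow> wf_map f \<Longrightarrow> dom_c g = cod_c f \<Longrightarrow> wf_map (comp_c g f)"
  unfolding comp_c_def by (rule wf_map_mk_map) (simp add: length_fun_c)

lemma comp_c_assoc:
  "wf_map f \<Longrightarrow> dom_c g = cod_c f \<Longrightarrow> comp_c h (comp_c g f) = comp_c (comp_c h g) f"
  unfolding comp_c_def by (simp, rule mk_map_cong, simp add: length_fun_c)

lemma idc_simps [simp]: "dom_c (idc n) = n" "cod_c (idc n) = n"
  by (auto simp: idc_def)

lemma fun_c_idc: "length v = n \<Longrightarrow> fun_c (idc n) v = v"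
  by (simp add: idc_def)

lemma wf_map_idc: "wf_map (idc n)"
  unfolding idc_def by (rule wf_map_mk_map) simp

lemma comp_c_idc_right: "wf_map g \<Longrightarrow> dom_c g = n \<Longrightarrow> comp_c g (idc n) = g"
  by (rule cmap_eqI) (auto simp: wf_map_comp_c wf_map_idc fun_c_comp_c fun_c_idc)

lemma comp_c_idc_left: "wf_map f \<Longrightarrow> cod_c f = n \<Longrightarrow> comp_c (idc n) f = f"
  by (rule cmap_eqI) (auto simp: wf_map_comp_c wf_map_idc fun_c_comp_c fun_c_idc length_fun_c)

definition vertex_map :: "nat \<Rightarrow> vert \<Rightarrow> cmap" where
  "vertex_map n v = mk_map 0 n (\<lambda>_. v)"

lemma vertex_map_simps [simp]:
  "dom_c (vertex_map n v) = 0" "cod_c (vertex_map n v) = n" "fun_c (vertex_map n v) [] = v"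
  by (auto simp: vertex_map_def)

lemma wf_map_vertex_map: "length v = n \<Longrightarrow> wf_map (vertex_map n v)"
  unfolding vertex_map_def by (rule wf_map_mk_map) simp

lemma dom_0_eq_vertex_map: "wf_map f \<Longrightarrow> dom_c f = 0 \<Longrightarrow> f = vertex_map (cod_c f) (fun_c f [])"
  by (rule cmap_eqI) (auto simp: wf_map_vertex_map length_fun_c)

lemma comp_c_vertex_map:
  "wf_map f \<Longrightarrow> length v = dom_c f \<Longrightarrow>
   comp_c f (vertex_map (dom_c f) v) = vertex_map (cod_c f) (fun_c f v)"
  by (rule cmap_eqI) (auto simp: wf_map_comp_c wf_map_vertex_map length_fun_c fun_c_comp_c)

lemma vertex_map_inj: "vertex_map n v = vertex_map n w \<Longrightarrow> v = w"
  by (metis vertex_map_simps(3))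

lemma finite_cube: "finite (cube n)"
proof -
  have "cube n = {xs :: vert. set xs \<subseteq> UNIV \<and> length xs = n}" by auto
  then show ?thesis using finite_lists_length_eq[of "UNIV :: bool set" n] by simp
qed

lemma finite_wf_maps: "finite {f. wf_map f \<and> dom_c f = n \<and> cod_c f = p}"
proof -
  obtain vs where vs: "set vs = cube n" using finite_list[OF finite_cube] by blast
  let ?H = "{f. wf_map f \<and> dom_c f = n \<and> cod_c f = p}"
  let ?m = "\<lambda>f. map (fun_c f) vs"
  show ?thesis
  proof (rule inj_on_finite[of ?m ?H "{xs. set xs \<subseteq> cube p \<and> length xs = length vs}"])
    show "inj_on ?m ?H"
    proof (rule inj_onI)
      fix f g assume f: "f \<in> ?H" and g: "g \<in> ?H" and e: "?m f = ?m g"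
      show "f = g"
      proof (rule cmap_eqI)
        fix v :: vert assume "length v = dom_c f"
        then have "v \<in> set vs" using vs f by simp
        then show "fun_c f v = fun_c g v" using e by simp
      qed (use f g in auto)
    qed
    show "?m ` ?H \<subseteq> {xs. set xs \<subseteq> cube p \<and> length xs = length vs}"
      using vs length_fun_c by auto
    show "finite {xs. set xs \<subseteq> cube p \<and> length xs = length vs}"
      using finite_lists_length_eq[OF finite_cube] by blast
  qed
qed

section \<open>The order and the distance on vertices\<close>

lemma dist_v_Nil [simp]: "dist_v [] w = 0" "dist_v v [] = 0"
  by (auto simp: dist_v_def)

lemma dist_v_Cons [simp]: "dist_v (a # x) (b # y) = (if a \<noteq> b then 1 else 0) + dist_v x y"
  by (simp add: dist_v_def)

lemma dist_v_append:
  "length x = length y \<Longrightarrow> dist_v (x @ x') (y @ y') = dist_v x y + dist_v x' y'"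
  by (simp add: dist_v_def)

lemma dist_v_eq_0_iff: "length x = length y \<Longrightarrow> dist_v x y = 0 \<longleftrightarrow> x = y"
  by (induction x y rule: list_induct2) auto

lemma dist_v_self [simp]: "dist_v z z = 0"
  by (induction z) auto

lemma dist_v_commute: "dist_v x y = dist_v y x"
proof (induction x arbitrary: y)
  case (Cons a x)
  then show ?case by (cases y) auto
qed simp

lemma dist_v_map:
  "dist_v (map f xs) (map f' xs) = length (filter (\<lambda>j. f j \<noteq> f' j) xs)"
  by (induction xs) auto

lemma leq_v_Nil [simp]: "leq_v [] []"
  by (simp add: leq_v_def)

lemma leq_v_Cons [simp]: "leq_v (a # x) (b # y) = (a \<le> b \<and> leq_v x y)"
  by (simp add: leq_v_def)

lemma leq_v_length: "leq_v x y \<Longrightarrow> length x = length y"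
  by (simp add: leq_v_def list_all2_lengthD)

lemma leq_v_append:
  "length x = length y \<Longrightarrow> leq_v (x @ x') (y @ y') = (leq_v x y \<and> leq_v x' y')"
  by (simp add: leq_v_def list_all2_append)

lemma leq_v_refl: "leq_v x x"
  unfolding leq_v_def by (simp add: list_all2_refl)

lemma leq_v_trans: "leq_v x y \<Longrightarrow> leq_v y z \<Longrightarrow> leq_v x z"
  unfolding leq_v_def by (rule list_all2_trans) auto

lemma leq_v_antisym: "leq_v x y \<Longrightarrow> leq_v y x \<Longrightarrow> x = y"
proof (induction x arbitrary: y)
  case Nil
  then show ?case by (simp add: leq_v_def)
next
  case (Cons a x)
  then show ?case by (cases y) (auto simp: leq_v_def)
qed

lemma less_v_trans: "less_v x z \<Longrightarrow> less_v z y \<Longrightarrow> less_v x y"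
  unfolding less_v_def using leq_v_trans leq_v_antisym by blast

lemma less_v_flip_one:
  "less_v [False] [True]" "dist_v [False] [True] = 1"
  by (auto simp: less_v_def)

lemma dist_v_1_cases:
  assumes "length x = length y" "dist_v x y = 1"
  obtains l r c where "x = l @ c # r" "y = l @ (\<not> c) # r"
  using assms
proof (induction x y arbitrary: thesis rule: list_induct2)
  case (Cons a x b y)
  show ?case
  proof (cases "a = b")
    case True
    with Cons.prems obtain l r c where "x = l @ c # r" "y = l @ (\<not> c) # r"
      by (auto intro: Cons.IH)
    with True show ?thesis by (intro Cons.prems(1)[of "a # l" c r]) auto
  next
    case False
    with Cons.prems have "x = y" by (simp add: dist_v_eq_0_iff[OF Cons.hyps])
    with False show ?thesis by (intro Cons.prems(1)[of "[]" a x]) auto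
  qed
qed simp

lemma less_v_cases:
  assumes "less_v x y"
  obtains l r l' r' where "x = l @ False # r" "y = l' @ True # r'" "length l = length l'"
proof -
  have "length x = length y" using assms leq_v_length less_v_def by blast
  then have "\<exists>l r l' r'. x = l @ False # r \<and> y = l' @ True # r' \<and> length l = length l'"
    using assms
  proof (induction x y rule: list_induct2)
    case (Cons a x b y)
    show ?case
    proof (cases "a = b")
      case True
      then have "less_v x y" using Cons.prems by (auto simp: less_v_def)
      with Cons.IH obtain l r l' r' where "x = l @ False # r" "y = l' @ True # r'" "length l = length l'"
        by blast
      with True show ?thesis by (intro exI[of _ "a # l"] exI[of _ r] exI[of _ "a # l'"] exI[of _ r']) auto
    next
      case False
      then have "a = False" "b = True" using Cons.prems by (auto simp: less_v_def)
      then show ?thesis by (intro exI[of _ "[]"] exI[of _ x] exI[of _ "[]"] exI[of _ y]) auto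
    qed
  qed (simp add: less_v_def)
  then show ?thesis using that by blast
qed

lemma less_v_preserved_if_edges:
  assumes edges: "\<And>x y. length x = n \<Longrightarrow> length y = n \<Longrightarrow> dist_v x y = 1 \<Longrightarrow> less_v x y \<Longrightarrow>
                         less_v (g x) (g y)"
  shows "length x = n \<Longrightarrow> length y = n \<Longrightarrow> less_v x y \<Longrightarrow> less_v (g x) (g y)"
proof (induction "dist_v x y" arbitrary: x y rule: less_induct)
  case less
  obtain l r l' r' where lr: "x = l @ False # r" "y = l' @ True # r'" "length l = length l'"
    using less_v_cases[OF less.prems(3)] by blast
  have lr2: "length r = length r'" using lr less.prems by simp
  define z where "z = l @ True # r"
  have lz: "length z = n" using z_def lr less.prems by simp
  have lxy: "leq_v l l'" "leq_v r r'"
    using less.prems(3) lr lr2 by (auto simp: less_v_def leq_v_append)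
  have "less_v x z" "dist_v x z = 1"
    using lr z_def by (auto simp: less_v_def leq_v_append leq_v_refl dist_v_append)
  then have gxz: "less_v (g x) (g z)" using edges less.prems(1) lz by blast
  show ?case
  proof (cases "z = y")
    case False
    have "less_v z y" using lr z_def lxy False by (simp add: less_v_def leq_v_append)
    moreover have "dist_v z y < dist_v x y" using lr z_def lr2 by (simp add: dist_v_append)
    ultimately show ?thesis using less.hyps less.prems lz gxz less_v_trans by blast
  qed (use gxz in simp)
qed

lemma count_True_mono: "leq_v s t \<Longrightarrow> count_list s True \<le> count_list t True"
proof (induction s arbitrary: t)
  case (Cons c s)
  then show ?case by (cases t) (fastforce simp: leq_v_def)+
qed simp

lemma count_True_strict_mono: "less_v u v \<Longrightarrow> count_list u True < count_list v True"
proof -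
  assume uv: "less_v u v"
  then obtain l r l' r' where lr: "u = l @ False # r" "v = l' @ True # r'" "length l = length l'"
    by (rule less_v_cases)
  with uv have "leq_v l l'" "leq_v r r'"
    by (auto simp: less_v_def leq_v_append leq_v_length)
  with lr show ?thesis using count_True_mono[of l l'] count_True_mono[of r r'] by simp
qed

section \<open>Face maps and the box category\<close>

definition insert_at :: "nat \<Rightarrow> bool \<Rightarrow> vert \<Rightarrow> vert" where
  "insert_at k a v = take k v @ a # drop k v"

lemma length_insert_at [simp]: "length (insert_at k a v) = Suc (length v)"
  by (simp add: insert_at_def)

lemma nth_insert_at_skip:
  "k \<le> length u \<Longrightarrow> j < length u \<Longrightarrow> insert_at k a u ! (if j < k then j else Suc j) = u ! j"
  by (auto simp: insert_at_def nth_append min_def)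

lemma nth_insert_at: "k \<le> length u \<Longrightarrow> insert_at k a u ! k = a"
  by (auto simp: insert_at_def nth_append min_def)

lemma dist_v_insert_at:
  assumes "length v = length w" "k \<le> length v"
  shows "dist_v (insert_at k a v) (insert_at k a w) = dist_v v w"
proof -
  have "dist_v v w = dist_v (take k v @ drop k v) (take k w @ drop k w)" by simp
  also have "\<dots> = dist_v (take k v) (take k w) + dist_v (drop k v) (drop k w)"
    using assms by (intro dist_v_append) simp
  finally show ?thesis using assms by (simp add: insert_at_def dist_v_append)
qed

lemma leq_v_insert_at:
  assumes "length v = length w" "k \<le> length v"
  shows "leq_v (insert_at k a v) (insert_at k a w) = leq_v v w"
proof -
  have "leq_v v w = leq_v (take k v @ drop k v) (take k w @ drop k w)" by simp
  also have "\<dots> = (leq_v (take k v) (take k w) \<and> leq_v (drop k v) (drop k w))"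
    using assms by (intro leq_v_append) simp
  finally show ?thesis using assms by (simp add: insert_at_def leq_v_append)
qed

lemma face_simps [simp]: "dom_c (face n i a) = n - 1" "cod_c (face n i a) = n"
  by (auto simp: face_def)

lemma fun_c_face: "length v = n - 1 \<Longrightarrow> fun_c (face n i a) v = insert_at (i - 1) a v"
  by (simp add: face_def insert_at_def)

lemma wf_map_face: "1 \<le> i \<Longrightarrow> i \<le> n \<Longrightarrow> wf_map (face n i a)"
  unfolding face_def by (rule wf_map_mk_map) auto

definition order_isometry :: "cmap \<Rightarrow> bool" where
  "order_isometry f \<longleftrightarrow> wf_map f \<and> (\<forall>x y. length x = dom_c f \<longrightarrow> length y = dom_c f \<longrightarrow>
      leq_v (fun_c f x) (fun_c f y) = leq_v x y \<and> dist_v (fun_c f x) (fun_c f y) = dist_v x y)"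

lemma box_order_isometry: "f \<in> box \<Longrightarrow> order_isometry f"
proof (induction rule: box.induct)
  case (box_id n)
  then show ?case by (simp add: order_isometry_def wf_map_idc fun_c_idc)
next
  case (box_face f i n a)
  then have wf: "wf_map (comp_c (face n i a) f)"
    by (simp add: order_isometry_def wf_map_comp_c wf_map_face)
  have "fun_c (comp_c (face n i a) f) x = insert_at (i - 1) a (fun_c f x)
          \<and> length (fun_c f x) = n - 1" if "length x = dom_c f" for x
    using that box_face by (simp add: fun_c_comp_c fun_c_face order_isometry_def length_fun_c)
  with box_face wf show ?case
    by (simp add: order_isometry_def leq_v_insert_at dist_v_insert_at)
qed

lemma box_wf_map: "f \<in> box \<Longrightarrow> wf_map f"
  using box_order_isometry order_isometry_def by blast

lemma order_isometry_adj_pres: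
  assumes f: "order_isometry f"
  shows "adj_pres f"
proof -
  have iso: "leq_v (fun_c f x) (fun_c f y) = leq_v x y" "dist_v (fun_c f x) (fun_c f y) = dist_v x y"
    if "length x = dom_c f" "length y = dom_c f" for x y
    using f that unfolding order_isometry_def by blast+
  have "fun_c f x \<noteq> fun_c f y" if "length x = dom_c f" "length y = dom_c f" "x \<noteq> y" for x y
    using iso(2)[OF that(1,2)] dist_v_eq_0_iff that by (metis dist_v_self)
  then show ?thesis
    using f iso unfolding adj_pres_def order_isometry_def less_v_def by auto
qed

lemma box_adj_pres: "f \<in> box \<Longrightarrow> adj_pres f"
  using box_order_isometry order_isometry_adj_pres by blast

lemma adj_pres_comp_c: "adj_pres g \<Longrightarrow> adj_pres f \<Longrightarrow> dom_c g = cod_c f \<Longrightarrow> adj_pres (comp_c g f)"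
  unfolding adj_pres_def by (auto simp: wf_map_comp_c fun_c_comp_c length_fun_c)

lemma box_comp_c: "g \<in> box \<Longrightarrow> f \<in> box \<Longrightarrow> dom_c g = cod_c f \<Longrightarrow> comp_c g f \<in> box"
proof (induction arbitrary: f rule: box.induct)
  case (box_id n)
  then show ?case by (simp add: comp_c_idc_left box_wf_map)
next
  case (box_face g i n a)
  then have "comp_c (comp_c (face n i a) g) f = comp_c (face n i a) (comp_c g f)"
    by (simp add: comp_c_assoc box_wf_map)
  with box_face show ?case by (simp add: box.box_face)
qed

lemma cat_of_cubes_box: "cat_of_cubes box"
  unfolding cat_of_cubes_def using box_adj_pres box_comp_c by blast

lemma cat_of_cubes_hat_box: "cat_of_cubes hat_box"
  unfolding cat_of_cubes_def hat_box_def using box_adj_pres adj_pres_comp_c by blast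

lemma vertex_map_in_box: "length v = n \<Longrightarrow> vertex_map n v \<in> box"
proof (induction v arbitrary: n)
  case Nil
  have "vertex_map 0 [] = idc 0" by (rule cmap_eqI) (auto simp: wf_map_vertex_map wf_map_idc fun_c_idc)
  with Nil show ?case by (simp add: box.box_id)
next
  case (Cons c v)
  have "comp_c (face (Suc (length v)) 1 c) (vertex_map (length v) v) = vertex_map n (c # v)"
    using Cons.prems
    by (intro cmap_eqI) (auto simp: wf_map_vertex_map wf_map_comp_c wf_map_face fun_c_comp_c
        fun_c_face insert_at_def)
  with Cons box.box_face[of "vertex_map (length v) v" 1 "Suc (length v)" c] show ?case by auto
qed

definition edge :: "vert \<Rightarrow> vert \<Rightarrow> cmap" where
  "edge l r = mk_map 1 (length l + 1 + length r) (\<lambda>v. l @ hd v # r)"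

lemma edge_simps [simp]: "dom_c (edge l r) = 1" "cod_c (edge l r) = length l + 1 + length r"
  by (auto simp: edge_def)

lemma fun_c_edge: "length v = 1 \<Longrightarrow> fun_c (edge l r) v = l @ hd v # r"
  by (simp add: edge_def)

lemma wf_map_edge: "wf_map (edge l r)"
  unfolding edge_def by (rule wf_map_mk_map) simp

lemma edge_in_box: "edge l r \<in> box"
proof (induction l)
  case Nil
  show ?case
  proof (induction r)
    case Nil
    have "edge [] [] = idc 1"
      by (rule cmap_eqI) (auto simp: wf_map_edge wf_map_idc fun_c_idc fun_c_edge length_Suc_conv)
    then show ?case by (simp add: box.box_id)
  next
    case (Cons c r)
    have "comp_c (face (length r + 2) 2 c) (edge [] r) = edge [] (c # r)"
      by (rule cmap_eqI) (auto simp: wf_map_edge wf_map_comp_c wf_map_face fun_c_comp_c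
          fun_c_face insert_at_def fun_c_edge)
    with Cons box.box_face[of "edge [] r" 2 "length r + 2" c] show ?case by auto
  qed
next
  case (Cons c l)
  have "comp_c (face (length l + length r + 2) 1 c) (edge l r) = edge (c # l) r"
    by (rule cmap_eqI) (auto simp: wf_map_edge wf_map_comp_c wf_map_face fun_c_comp_c
        fun_c_face insert_at_def fun_c_edge)
  with Cons box.box_face[of "edge l r" 1 "length l + length r + 2" c] show ?case by auto
qed

section \<open>Adjacency-preserving maps\<close>

lemma length_1_vert: "length (v :: vert) = 1 \<longleftrightarrow> v = [False] \<or> v = [True]"
  by (auto simp: length_Suc_conv)

lemma adj_pres_dom_1_eq_edge:
  assumes f: "adj_pres f" "dom_c f = 1"
  obtains l r where "f = edge l r"
proof -
  have wf: "wf_map f" using f adj_pres_def by auto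
  have lt: "less_v (fun_c f [False]) (fun_c f [True])"
    and d: "dist_v (fun_c f [False]) (fun_c f [True]) = 1"
    using f less_v_flip_one by (auto simp: adj_pres_def)
  have "length (fun_c f [False]) = length (fun_c f [True])" using wf f by (simp add: length_fun_c)
  then obtain l r c where lr: "fun_c f [False] = l @ c # r" "fun_c f [True] = l @ (\<not> c) # r"
    using d by (rule dist_v_1_cases)
  with lt have "\<not> c" by (auto simp: less_v_def leq_v_append)
  have "f = edge l r"
  proof (rule cmap_eqI)
    have "length (fun_c f [False]) = cod_c f" using wf f by (intro length_fun_c) auto
    then show "cod_c f = cod_c (edge l r)" using lr by simp
    fix v :: vert assume "length v = dom_c f"
    then have "v = [False] \<or> v = [True]" using f length_1_vert by auto
    then show "fun_c f v = fun_c (edge l r) v" using lr \<open>\<not> c\<close> by (auto simp: fun_c_edge)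
  qed (use wf f wf_map_edge in auto)
  then show ?thesis by (rule that)
qed

lemma adj_pres_dom_le_1_in_box: "adj_pres f \<Longrightarrow> dom_c f \<le> 1 \<Longrightarrow> f \<in> box"
proof -
  assume f: "adj_pres f" "dom_c f \<le> 1"
  have wf: "wf_map f" using f adj_pres_def by auto
  show ?thesis
  proof (cases "dom_c f = 0")
    case True
    then show ?thesis
      using dom_0_eq_vertex_map[OF wf] vertex_map_in_box length_fun_c[OF wf] by (metis list.size(3))
  next
    case False
    with f obtain l r where "f = edge l r" by (metis adj_pres_dom_1_eq_edge le_antisym less_one not_le)
    then show ?thesis using edge_in_box by simp
  qed
qed

lemma cat_of_cubes_wf_map: "cat_of_cubes A \<Longrightarrow> f \<in> A \<Longrightarrow> wf_map f"
  by (auto simp: cat_of_cubes_def adj_pres_def)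

lemma cat_of_cubes_boxD: "cat_of_cubes A \<Longrightarrow> f \<in> box \<Longrightarrow> f \<in> A"
  by (auto simp: cat_of_cubes_def)

lemma cat_of_cubes_comp_c:
  "cat_of_cubes A \<Longrightarrow> f \<in> A \<Longrightarrow> g \<in> A \<Longrightarrow> dom_c g = cod_c f \<Longrightarrow> comp_c g f \<in> A"
  by (auto simp: cat_of_cubes_def)

lemma cat_of_cubes_adj_pres: "cat_of_cubes A \<Longrightarrow> f \<in> A \<Longrightarrow> adj_pres f"
  by (auto simp: cat_of_cubes_def)

lemma cat_of_cubes_idc: "cat_of_cubes A \<Longrightarrow> idc n \<in> A"
  by (auto simp: cat_of_cubes_def intro: box.box_id)

lemma cat_of_cubes_low_maps:
  "cat_of_cubes A \<Longrightarrow> k \<le> 1 \<Longrightarrow>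
   {f \<in> A. dom_c f = k \<and> cod_c f = p} = {\<psi> \<in> box. dom_c \<psi> = k \<and> cod_c \<psi> = p}"
  using adj_pres_dom_le_1_in_box cat_of_cubes_adj_pres cat_of_cubes_boxD by fastforce

lemma cat_of_cubes_comp_low:
  "cat_of_cubes A \<Longrightarrow> adj_pres g \<Longrightarrow> \<phi> \<in> A \<Longrightarrow> cod_c \<phi> = dom_c g \<Longrightarrow> dom_c \<phi> \<le> 1 \<Longrightarrow>
   comp_c g \<phi> \<in> box"
  using adj_pres_dom_le_1_in_box adj_pres_comp_c cat_of_cubes_adj_pres by simp

text \<open>An adjacency-preserving \<open>[n] \<rightarrow> [p]\<close> maps the chain \<open>1^k 0^(n-k)\<close>, \<open>k \<le> n\<close>, to a
  strictly increasing chain, so its image of \<open>1^n\<close> has at least \<open>n\<close> ones.\<close>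

lemma adj_pres_dom_le_cod: "adj_pres f \<Longrightarrow> dom_c f \<le> cod_c f"
proof -
  assume f: "adj_pres f"
  let ?n = "dom_c f"
  let ?c = "\<lambda>k. replicate k True @ replicate (?n - k) False"
  have "k \<le> count_list (fun_c f (?c k)) True" if "k \<le> ?n" for k
    using that
  proof (induction k)
    case (Suc k)
    have "?c k = replicate k True @ False # replicate (?n - Suc k) False"
      using Suc.prems by (simp add: Suc_diff_Suc replicate_Suc[symmetric])
    moreover have "?c (Suc k) = replicate k True @ True # replicate (?n - Suc k) False"
      by (simp add: replicate_append_same[symmetric])
    ultimately have "less_v (?c k) (?c (Suc k))"
      by (auto simp: less_v_def leq_v_append leq_v_refl)
    then have "less_v (fun_c f (?c k)) (fun_c f (?c (Suc k)))"
      using f Suc.prems unfolding adj_pres_def by auto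
    with Suc show ?case using count_True_strict_mono by fastforce
  qed simp
  then have "?n \<le> count_list (fun_c f (replicate ?n True)) True" by fastforce
  also have "\<dots> \<le> length (fun_c f (replicate ?n True))"
    by (metis count_le_length)
  also have "\<dots> = cod_c f" using f by (simp add: adj_pres_def length_fun_c)
  finally show ?thesis .
qed

section \<open>The left adjoint \<open>L\<^sub>A\<close>\<close>

lemma rtrancl_invariant_map:
  assumes "(a, b) \<in> R\<^sup>*" "P a"
    and "\<And>a b. P a \<Longrightarrow> (a, b) \<in> R \<Longrightarrow> P b \<and> (g a, g b) \<in> S\<^sup>*"
  shows "P b \<and> (g a, g b) \<in> S\<^sup>*"
  using assms(1)
proof (induction rule: rtrancl_induct)
  case base
  then show ?case using assms(2) by simp
next
  case (step y z)
  then show ?case using assms(3)[of y z] by (meson rtrancl_trans)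
qed

abbreviation LA_class :: "cmap set \<Rightarrow> 'x psh \<Rightarrow> nat \<times> 'x \<times> cmap \<Rightarrow> (nat \<times> 'x \<times> cmap) set" where
  "LA_class A K t \<equiv> LA_rel A K `` {t}"

lemma LA_rel_refl: "(a, a) \<in> LA_rel A K"
  unfolding LA_rel_def by simp

lemma LA_rel_sym: "(a, b) \<in> LA_rel A K \<Longrightarrow> (b, a) \<in> LA_rel A K"
proof -
  have "(LA_gen A K \<union> (LA_gen A K)\<inverse>)\<inverse> = LA_gen A K \<union> (LA_gen A K)\<inverse>" by auto
  then show "(a, b) \<in> LA_rel A K \<Longrightarrow> (b, a) \<in> LA_rel A K"
    unfolding LA_rel_def by (metis rtrancl_converseI)
qed

lemma LA_rel_trans: "(a, b) \<in> LA_rel A K \<Longrightarrow> (b, c) \<in> LA_rel A K \<Longrightarrow> (a, c) \<in> LA_rel A K"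
  unfolding LA_rel_def by (rule rtrancl_trans)

lemma LA_class_eq_iff: "LA_class A K t = LA_class A K t' \<longleftrightarrow> (t, t') \<in> LA_rel A K"
proof
  assume "LA_class A K t = LA_class A K t'"
  then show "(t, t') \<in> LA_rel A K" using LA_rel_refl LA_rel_sym by blast
next
  assume "(t, t') \<in> LA_rel A K"
  then show "LA_class A K t = LA_class A K t'" using LA_rel_sym LA_rel_trans by blast
qed

lemma LA_gen_in_LA_rel: "(a, b) \<in> LA_gen A K \<Longrightarrow> (a, b) \<in> LA_rel A K"
  unfolding LA_rel_def by auto

lemma cells_LA: "cells (LA A K) n = LA_class A K ` LA_elems A K n"
  by (simp add: LA_def)

lemma LA_genI:
  "\<psi> \<in> box \<Longrightarrow> dom_c \<psi> = m \<Longrightarrow> x \<in> cells K (cod_c \<psi>) \<Longrightarrow> \<phi> \<in> A \<Longrightarrow> cod_c \<phi> = m \<Longrightarrow>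
   ((m, act K \<psi> x, \<phi>), (cod_c \<psi>, x, comp_c \<psi> \<phi>)) \<in> LA_gen A K"
  unfolding LA_gen_def by blast

lemma LA_genE:
  assumes "(a, b) \<in> LA_gen A K"
  obtains m \<psi> x \<phi> where "a = (m, act K \<psi> x, \<phi>)" "b = (cod_c \<psi>, x, comp_c \<psi> \<phi>)"
    "\<psi> \<in> box" "dom_c \<psi> = m" "x \<in> cells K (cod_c \<psi>)" "\<phi> \<in> A" "cod_c \<phi> = m"
  using assms unfolding LA_gen_def by blast

lemma LA_rel_induct_gen:
  assumes "(a, b) \<in> LA_rel A K" "P a"
    and "\<And>a b. P a \<Longrightarrow> (a, b) \<in> LA_gen A K \<union> (LA_gen A K)\<inverse> \<Longrightarrow> P b \<and> (g a, g b) \<in> LA_rel B K'"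
  shows "(g a, g b) \<in> LA_rel B K'"
  using rtrancl_invariant_map[of a b _ P g] assms unfolding LA_rel_def by blast

definition box_natural :: "'x psh \<Rightarrow> 'y psh \<Rightarrow> (nat \<Rightarrow> 'x \<Rightarrow> 'y) \<Rightarrow> bool" where
  "box_natural K K' G \<longleftrightarrow> (\<forall>n. \<forall>x\<in>cells K n. G n x \<in> cells K' n)
     \<and> (\<forall>\<psi>\<in>box. \<forall>x\<in>cells K (cod_c \<psi>). G (dom_c \<psi>) (act K \<psi> x) = act K' \<psi> (G (cod_c \<psi>) x))"

definition map_elem :: "(nat \<Rightarrow> 'x \<Rightarrow> 'y) \<Rightarrow> nat \<times> 'x \<times> cmap \<Rightarrow> nat \<times> 'y \<times> cmap" where
  "map_elem G t = (case t of (m, x, \<phi>) \<Rightarrow> (m, G m x, \<phi>))"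

lemma map_elem_simp [simp]: "map_elem G (m, x, \<phi>) = (m, G m x, \<phi>)"
  by (simp add: map_elem_def)

lemma LA_rel_map_elem:
  assumes N: "box_natural K K' G" and ab: "(a, b) \<in> LA_rel A K"
  shows "(map_elem G a, map_elem G b) \<in> LA_rel A K'"
proof -
  have gen: "(map_elem G a, map_elem G b) \<in> LA_gen A K'" if "(a, b) \<in> LA_gen A K" for a b
    using that
  proof (rule LA_genE)
    fix m \<psi> x \<phi> assume e: "a = (m, act K \<psi> x, \<phi>)" "b = (cod_c \<psi>, x, comp_c \<psi> \<phi>)"
      "\<psi> \<in> box" "dom_c \<psi> = m" "x \<in> cells K (cod_c \<psi>)" "\<phi> \<in> A" "cod_c \<phi> = m"
    with N have "G m (act K \<psi> x) = act K' \<psi> (G (cod_c \<psi>) x)" "G (cod_c \<psi>) x \<in> cells K' (cod_c \<psi>)"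
      unfolding box_natural_def by auto
    with e show ?thesis using LA_genI[of \<psi> m "G (cod_c \<psi>) x" K' \<phi> A] by simp
  qed
  have "(map_elem G a, map_elem G b) \<in> LA_rel A K'" if "(a, b) \<in> LA_gen A K \<union> (LA_gen A K)\<inverse>" for a b
    using that gen LA_gen_in_LA_rel LA_rel_sym by blast
  then show ?thesis by (intro LA_rel_induct_gen[OF ab, of "\<lambda>_. True"]) auto
qed

definition LA_map :: "cmap set \<Rightarrow> 'y psh \<Rightarrow> (nat \<Rightarrow> 'x \<Rightarrow> 'y) \<Rightarrow> (nat \<times> 'x \<times> cmap) set
                      \<Rightarrow> (nat \<times> 'y \<times> cmap) set" where
  "LA_map A K' G C = LA_rel A K' `` (map_elem G ` C)"

lemma LA_map_class:
  assumes "box_natural K K' G"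
  shows "LA_map A K' G (LA_class A K t) = LA_class A K' (map_elem G t)"
proof -
  have "LA_class A K' (map_elem G b) = LA_class A K' (map_elem G t)" if "(t, b) \<in> LA_rel A K" for b
    using LA_rel_map_elem[OF assms that] LA_class_eq_iff LA_rel_sym by metis
  then show ?thesis unfolding LA_map_def using LA_rel_refl by blast
qed

lemma LA_lab_eq_LA_map:
  "LA_lab A \<Sigma> lab n C = {z. shrel A (LA A (bang \<Sigma>)) n (LA_map A (bang \<Sigma>) lab C) z}"
  by (simp add: LA_lab_def LA_map_def map_elem_def)

definition elem_act :: "cmap \<Rightarrow> nat \<times> 'x \<times> cmap \<Rightarrow> nat \<times> 'x \<times> cmap" where
  "elem_act f t = (case t of (m, x, \<phi>) \<Rightarrow> (m, x, comp_c \<phi> f))"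

lemma elem_act_simp [simp]: "elem_act f (m, x, \<phi>) = (m, x, comp_c \<phi> f)"
  by (simp add: elem_act_def)

lemma act_LA: "act (LA A K) f C = LA_rel A K `` (elem_act f ` C)"
  by (simp add: LA_def elem_act_def)

lemma LA_gen_elem_act:
  assumes A: "cat_of_cubes A" and f: "f \<in> A" and ab: "(a, b) \<in> LA_gen A K"
    and d: "dom_c (snd (snd a)) = cod_c f"
  shows "(elem_act f a, elem_act f b) \<in> LA_gen A K" "dom_c (snd (snd b)) = cod_c f"
proof -
  obtain m \<psi> x \<phi> where e: "a = (m, act K \<psi> x, \<phi>)" "b = (cod_c \<psi>, x, comp_c \<psi> \<phi>)"
    "\<psi> \<in> box" "dom_c \<psi> = m" "x \<in> cells K (cod_c \<psi>)" "\<phi> \<in> A" "cod_c \<phi> = m"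
    using ab by (rule LA_genE)
  have "comp_c (comp_c \<psi> \<phi>) f = comp_c \<psi> (comp_c \<phi> f)"
    using comp_c_assoc[OF cat_of_cubes_wf_map[OF A f]] d e by simp
  moreover have "comp_c \<phi> f \<in> A" using cat_of_cubes_comp_c[OF A f e(6)] d e by simp
  ultimately show "(elem_act f a, elem_act f b) \<in> LA_gen A K"
    using e LA_genI[of \<psi> m x K "comp_c \<phi> f" A] by simp
  show "dom_c (snd (snd b)) = cod_c f" using d e by simp
qed

lemma LA_gen_elem_act_converse:
  assumes A: "cat_of_cubes A" and f: "f \<in> A" and ab: "(b, a) \<in> LA_gen A K"
    and d: "dom_c (snd (snd a)) = cod_c f"
  shows "(elem_act f b, elem_act f a) \<in> LA_gen A K" "dom_c (snd (snd b)) = cod_c f"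
proof -
  obtain m \<psi> x \<phi> where e: "b = (m, act K \<psi> x, \<phi>)" "a = (cod_c \<psi>, x, comp_c \<psi> \<phi>)"
    "\<psi> \<in> box" "dom_c \<psi> = m" "x \<in> cells K (cod_c \<psi>)" "\<phi> \<in> A" "cod_c \<phi> = m"
    using ab by (rule LA_genE)
  then show "dom_c (snd (snd b)) = cod_c f" using d by simp
  then show "(elem_act f b, elem_act f a) \<in> LA_gen A K"
    using LA_gen_elem_act[OF A f ab] by simp
qed

lemma LA_rel_elem_act:
  assumes A: "cat_of_cubes A" and f: "f \<in> A" and ab: "(a, b) \<in> LA_rel A K"
    and d: "dom_c (snd (snd a)) = cod_c f"
  shows "(elem_act f a, elem_act f b) \<in> LA_rel A K"
proof (rule LA_rel_induct_gen[OF ab, of "\<lambda>t. dom_c (snd (snd t)) = cod_c f"])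
  fix a' b' assume a': "dom_c (snd (snd a')) = cod_c f"
    and "(a', b') \<in> LA_gen A K \<union> (LA_gen A K)\<inverse>"
  then consider "(a', b') \<in> LA_gen A K" | "(b', a') \<in> LA_gen A K" by blast
  then show "dom_c (snd (snd b')) = cod_c f \<and> (elem_act f a', elem_act f b') \<in> LA_rel A K"
  proof cases
    case 1
    then show ?thesis using LA_gen_elem_act[OF A f 1 a'] LA_gen_in_LA_rel by blast
  next
    case 2
    then show ?thesis using LA_gen_elem_act_converse[OF A f 2 a'] LA_gen_in_LA_rel LA_rel_sym by blast
  qed
qed (rule d)

lemma act_LA_class:
  assumes A: "cat_of_cubes A" and f: "f \<in> A" and t: "t \<in> LA_elems A K (cod_c f)"
  shows "act (LA A K) f (LA_class A K t) = LA_class A K (elem_act f t)"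
    and "elem_act f t \<in> LA_elems A K (dom_c f)"
proof -
  obtain m x \<phi> where tt: "t = (m, x, \<phi>)" by (cases t)
  with t have h: "x \<in> cells K m" "\<phi> \<in> A" "cod_c \<phi> = m" "dom_c \<phi> = cod_c f"
    by (auto simp: LA_elems_def)
  have "(elem_act f t, elem_act f b) \<in> LA_rel A K" if "(t, b) \<in> LA_rel A K" for b
    using LA_rel_elem_act[OF A f that] h tt by simp
  then show "act (LA A K) f (LA_class A K t) = LA_class A K (elem_act f t)"
    unfolding act_LA using LA_rel_refl LA_rel_trans by blast
  show "elem_act f t \<in> LA_elems A K (dom_c f)"
    using h tt cat_of_cubes_comp_c[OF A f h(2)] by (simp add: LA_elems_def)
qed

lemma act_LA_closed:
  "cat_of_cubes A \<Longrightarrow> f \<in> A \<Longrightarrow> C \<in> cells (LA A K) (cod_c f) \<Longrightarrow>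
   act (LA A K) f C \<in> cells (LA A K) (dom_c f)"
  using act_LA_class[of A f _ K] unfolding cells_LA by blast

lemma act_LA_comp_c:
  assumes A: "cat_of_cubes A" and f: "f \<in> A" and g: "g \<in> A" and d: "dom_c f = cod_c g"
    and C: "C \<in> cells (LA A K) (cod_c f)"
  shows "act (LA A K) g (act (LA A K) f C) = act (LA A K) (comp_c f g) C"
proof -
  obtain t where t: "t \<in> LA_elems A K (cod_c f)" "C = LA_class A K t" using C cells_LA by blast
  obtain m x \<phi> where tt: "t = (m, x, \<phi>)" by (cases t)
  have fg: "comp_c f g \<in> A" using cat_of_cubes_comp_c[OF A g f] d by simp
  have "dom_c \<phi> = cod_c f" using t(1) tt by (simp add: LA_elems_def)
  then have "elem_act g (elem_act f t) = elem_act (comp_c f g) t"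
    using tt comp_c_assoc[of g f \<phi>] cat_of_cubes_wf_map[OF A g] d by simp
  moreover have "act (LA A K) f C = LA_class A K (elem_act f t)"
    and "elem_act f t \<in> LA_elems A K (cod_c g)"
    using act_LA_class[OF A f t(1)] t d by simp_all
  moreover have "act (LA A K) (comp_c f g) C = LA_class A K (elem_act (comp_c f g) t)"
    using act_LA_class(1)[OF A fg] t by simp
  moreover have "act (LA A K) g (LA_class A K (elem_act f t)) = LA_class A K (elem_act g (elem_act f t))"
    by (rule act_LA_class(1)[OF A g]) fact
  ultimately show ?thesis by (simp only:)
qed

lemma act_LA_idc:
  assumes A: "cat_of_cubes A" and C: "C \<in> cells (LA A K) n"
  shows "act (LA A K) (idc n) C = C"
proof -
  obtain t where t: "t \<in> LA_elems A K n" "C = LA_class A K t" using C cells_LA by blast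
  obtain m x \<phi> where tt: "t = (m, x, \<phi>)" by (cases t)
  with t(1) have "comp_c \<phi> (idc n) = \<phi>"
    using cat_of_cubes_wf_map[OF A] by (auto simp: LA_elems_def comp_c_idc_right)
  then have "elem_act (idc n) t = t" using tt by simp
  moreover have "t \<in> LA_elems A K (cod_c (idc n))" using t(1) by simp
  ultimately show ?thesis using act_LA_class(1)[OF A cat_of_cubes_idc[OF A]] t(2) by metis
qed

section \<open>The reflection \<open>sh\<^sub>A\<close>\<close>

abbreviation sh_class :: "cmap set \<Rightarrow> 'x psh \<Rightarrow> nat \<Rightarrow> 'x \<Rightarrow> 'x set" where
  "sh_class A X n x \<equiv> {y. shrel A X n x y}"

definition act_closed :: "cmap set \<Rightarrow> 'x psh \<Rightarrow> bool" where
  "act_closed A X \<longleftrightarrow> (\<forall>f\<in>A. \<forall>x\<in>cells X (cod_c f). act X f x \<in> cells X (dom_c f))"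

lemma sh_class_eq_iff:
  assumes "x \<in> cells X n"
  shows "sh_class A X n x = sh_class A X n y \<longleftrightarrow> shrel A X n x y"
proof
  assume "sh_class A X n x = sh_class A X n y"
  moreover have "x \<in> sh_class A X n x" using assms by (simp add: shrel.sh_refl)
  ultimately show "shrel A X n x y" by (auto intro: shrel.sh_sym)
next
  assume h: "shrel A X n x y"
  have "shrel A X n x z \<longleftrightarrow> shrel A X n y z" for z
    using shrel.sh_trans[OF h, of z] shrel.sh_trans[OF shrel.sh_sym[OF h], of z] by blast
  then show "sh_class A X n x = sh_class A X n y" by simp
qed

lemma cells_sh: "cells (sh A X) n = sh_class A X n ` cells X n"
  by (simp add: sh_def)

lemma act_sh_class:
  assumes f: "f \<in> A" and x: "x \<in> cells X (cod_c f)"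
  shows "act (sh A X) f (sh_class A X (cod_c f) x) = sh_class A X (dom_c f) (act X f x)"
proof -
  have "(\<exists>y \<in> sh_class A X (cod_c f) x. shrel A X (dom_c f) (act X f y) z) \<longleftrightarrow>
        shrel A X (dom_c f) (act X f x) z" for z
  proof
    assume "\<exists>y \<in> sh_class A X (cod_c f) x. shrel A X (dom_c f) (act X f y) z"
    then obtain y where "shrel A X (cod_c f) x y" "shrel A X (dom_c f) (act X f y) z" by blast
    then show "shrel A X (dom_c f) (act X f x) z" using shrel.sh_act[OF _ f] shrel.sh_trans by metis
  next
    assume "shrel A X (dom_c f) (act X f x) z"
    then show "\<exists>y \<in> sh_class A X (cod_c f) x. shrel A X (dom_c f) (act X f y) z"
      using shrel.sh_refl[OF x] by blast
  qed
  then show ?thesis by (simp add: sh_def)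
qed

text \<open>Induction on the dimension, using that a face of a face is a face.\<close>

lemma shrel_of_low_faces:
  assumes cl: "act_closed A X" and A: "cat_of_cubes A"
    and funct: "\<And>f g x. f \<in> A \<Longrightarrow> g \<in> A \<Longrightarrow> dom_c f = cod_c g \<Longrightarrow> x \<in> cells X (cod_c f)
                 \<Longrightarrow> act X g (act X f x) = act X (comp_c f g) x"
    and ident: "\<And>x n. x \<in> cells X n \<Longrightarrow> act X (idc n) x = x"
  shows "x \<in> cells X k \<Longrightarrow> x' \<in> cells X k \<Longrightarrow>
     (\<And>\<phi>. \<phi> \<in> A \<Longrightarrow> cod_c \<phi> = k \<Longrightarrow> dom_c \<phi> \<le> 1 \<Longrightarrow>
        shrel A X (dom_c \<phi>) (act X \<phi> x) (act X \<phi> x'))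
     \<Longrightarrow> shrel A X k x x'"
proof (induction k arbitrary: x x' rule: less_induct)
  case (less k)
  show ?case
  proof (cases "k \<le> 1")
    case True
    then show ?thesis
      using less.prems(3)[OF cat_of_cubes_idc[OF A, of k]] ident less.prems(1,2) by simp
  next
    case False
    show ?thesis
    proof (rule shrel.sh_bnd)
      fix f assume f: "f \<in> A" "cod_c f = k" "dom_c f < k"
      show "shrel A X (dom_c f) (act X f x) (act X f x')"
      proof (rule less.IH[OF f(3)])
        show "act X f x \<in> cells X (dom_c f)" "act X f x' \<in> cells X (dom_c f)"
          using cl f less.prems unfolding act_closed_def by auto
        fix \<phi> assume \<phi>: "\<phi> \<in> A" "cod_c \<phi> = dom_c f" "dom_c \<phi> \<le> 1"
        have "comp_c f \<phi> \<in> A" using cat_of_cubes_comp_c[OF A \<phi>(1) f(1)] \<phi> by simp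
        then have "shrel A X (dom_c \<phi>) (act X (comp_c f \<phi>) x) (act X (comp_c f \<phi>) x')"
          using less.prems(3)[of "comp_c f \<phi>"] \<phi> f by simp
        then show "shrel A X (dom_c \<phi>) (act X \<phi> (act X f x)) (act X \<phi> (act X f x'))"
          using funct[OF f(1) \<phi>(1)] \<phi>(2) f(2) less.prems(1,2) by simp
      qed
    qed (use False less.prems in auto)
  qed
qed

lemma act_closed_LA: "cat_of_cubes A \<Longrightarrow> act_closed A (LA A K)"
  unfolding act_closed_def using act_LA_closed by blast

lemma ShL_cell_eqI:
  assumes A: "cat_of_cubes A" and s: "s \<in> cells (ShL A \<Sigma>) n" "s' \<in> cells (ShL A \<Sigma>) n"
    and e: "\<And>\<phi>. \<phi> \<in> A \<Longrightarrow> cod_c \<phi> = n \<Longrightarrow> dom_c \<phi> \<le> 1 \<Longrightarrow>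
              act (ShL A \<Sigma>) \<phi> s = act (ShL A \<Sigma>) \<phi> s'"
  shows "s = s'"
proof -
  let ?X = "LA A (bang \<Sigma>)"
  obtain x x' where x: "x \<in> cells ?X n" "s = sh_class A ?X n x" "x' \<in> cells ?X n" "s' = sh_class A ?X n x'"
    using s unfolding ShL_def cells_sh by blast
  have "shrel A ?X n x x'"
  proof (rule shrel_of_low_faces[OF act_closed_LA[OF A] A _ _ x(1) x(3)])
    fix \<phi> assume \<phi>: "\<phi> \<in> A" "cod_c \<phi> = n" "dom_c \<phi> \<le> 1"
    have "act ?X \<phi> x \<in> cells ?X (dom_c \<phi>)" using act_LA_closed[OF A \<phi>(1)] x(1) \<phi>(2) by blast
    with e[OF \<phi>] show "shrel A ?X (dom_c \<phi>) (act ?X \<phi> x) (act ?X \<phi> x')"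
      unfolding ShL_def x(2,4) using act_sh_class[OF \<phi>(1)] x(1,3) \<phi>(2) sh_class_eq_iff by metis
  next
    show "act ?X g (act ?X f y) = act ?X (comp_c f g) y"
      if "f \<in> A" "g \<in> A" "dom_c f = cod_c g" "y \<in> cells ?X (cod_c f)" for f g y
      using act_LA_comp_c[OF A that] .
    show "act ?X (idc m) y = y" if "y \<in> cells ?X m" for y m
      using act_LA_idc[OF A that] .
  qed
  then show ?thesis using x sh_class_eq_iff by metis
qed

lemma lps_iso_sym:
  assumes "lps_iso A X lX Y lY"
    and cl: "act_closed A X"
  shows "lps_iso A Y lY X lX"
proof -
  obtain h where h: "\<forall>n. bij_betw (h n) (cells X n) (cells Y n)"
    "\<forall>f \<in> A. \<forall>x \<in> cells X (cod_c f). h (dom_c f) (act X f x) = act Y f (h (cod_c f) x)"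
    "\<forall>n. \<forall>x \<in> cells X n. lY n (h n x) = lX n x"
    using assms unfolding lps_iso_def by blast
  define h' where "h' n = inv_into (cells X n) (h n)" for n
  have b: "bij_betw (h' n) (cells Y n) (cells X n)" for n
    using h(1) bij_betw_inv_into h'_def by metis
  have hh: "h n (h' n y) = y" if "y \<in> cells Y n" for n y
    using h(1) that unfolding h'_def by (meson bij_betw_inv_into_right)
  have hh': "h' n (h n x) = x" if "x \<in> cells X n" for n x
    using h(1) that unfolding h'_def by (meson bij_betw_inv_into_left)
  have "h' (dom_c f) (act Y f y) = act X f (h' (cod_c f) y)" if f: "f \<in> A" "y \<in> cells Y (cod_c f)" for f y
  proof -
    have x: "h' (cod_c f) y \<in> cells X (cod_c f)" using b f bij_betwE by blast
    then have "act Y f y = h (dom_c f) (act X f (h' (cod_c f) y))" using h(2) f hh[OF f(2)] by metis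
    moreover have "act X f (h' (cod_c f) y) \<in> cells X (dom_c f)"
      using cl f(1) x unfolding act_closed_def by blast
    ultimately show ?thesis using hh' by metis
  qed
  moreover have "lX n (h' n y) = lY n y" if "y \<in> cells Y n" for n y
  proof -
    have "h' n y \<in> cells X n" using b that bij_betwE by blast
    then show ?thesis using h(3) hh[OF that] by metis
  qed
  ultimately show ?thesis unfolding lps_iso_def using b by blast
qed

lemma lps_iso_trans:
  assumes "lps_iso A X lX Y lY" "lps_iso A Y lY Z lZ"
  shows "lps_iso A X lX Z lZ"
proof -
  obtain h where h: "\<forall>n. bij_betw (h n) (cells X n) (cells Y n)"
    "\<forall>f \<in> A. \<forall>x \<in> cells X (cod_c f). h (dom_c f) (act X f x) = act Y f (h (cod_c f) x)"
    "\<forall>n. \<forall>x \<in> cells X n. lY n (h n x) = lX n x"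
    using assms(1) unfolding lps_iso_def by blast
  obtain k where k: "\<forall>n. bij_betw (k n) (cells Y n) (cells Z n)"
    "\<forall>f \<in> A. \<forall>x \<in> cells Y (cod_c f). k (dom_c f) (act Y f x) = act Z f (k (cod_c f) x)"
    "\<forall>n. \<forall>x \<in> cells Y n. lZ n (k n x) = lY n x"
    using assms(2) unfolding lps_iso_def by blast
  have "bij_betw (\<lambda>x. k n (h n x)) (cells X n) (cells Z n)" for n
    using bij_betw_trans[OF h(1)[rule_format, of n] k(1)[rule_format, of n]] by (simp add: comp_def)
  moreover have "h n x \<in> cells Y n" if "x \<in> cells X n" for n x
    using h(1) that bij_betwE by blast
  ultimately show ?thesis unfolding lps_iso_def using h(2,3) k(2,3)
    by (intro exI[of _ "\<lambda>n x. k n (h n x)"]) simp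
qed

lemma box_natural_inv_into:
  assumes N: "box_natural K K' G" and B: "\<And>n. bij_betw (G n) (cells K n) (cells K' n)"
    and cl: "\<And>\<psi> x. \<psi> \<in> box \<Longrightarrow> x \<in> cells K (cod_c \<psi>) \<Longrightarrow> act K \<psi> x \<in> cells K (dom_c \<psi>)"
  shows "box_natural K' K (\<lambda>n. inv_into (cells K n) (G n))"
  unfolding box_natural_def
proof (intro conjI allI ballI)
  fix n y assume "y \<in> cells K' n"
  then show "inv_into (cells K n) (G n) y \<in> cells K n"
    using B by (meson bij_betwE bij_betw_inv_into)
next
  fix \<psi> y assume \<psi>: "\<psi> \<in> box" "y \<in> cells K' (cod_c \<psi>)"
  define x where "x = inv_into (cells K (cod_c \<psi>)) (G (cod_c \<psi>)) y"
  have x: "x \<in> cells K (cod_c \<psi>)" "G (cod_c \<psi>) x = y"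
    using B \<psi> unfolding x_def by (meson bij_betwE bij_betw_inv_into bij_betw_inv_into_right)+
  then have "act K' \<psi> y = G (dom_c \<psi>) (act K \<psi> x)" using N \<psi> unfolding box_natural_def by auto
  then show "inv_into (cells K (dom_c \<psi>)) (G (dom_c \<psi>)) (act K' \<psi> y) = act K \<psi> (inv_into (cells K (cod_c \<psi>)) (G (cod_c \<psi>)) y)"
    using bij_betw_inv_into_left[OF B cl[OF \<psi>(1) x(1)]] x_def by simp
qed

lemma map_elem_in_LA_elems:
  "(\<And>m x. x \<in> cells K m \<Longrightarrow> G m x \<in> cells K' m) \<Longrightarrow> t \<in> LA_elems A K n \<Longrightarrow>
   map_elem G t \<in> LA_elems A K' n"
  by (cases t) (auto simp: LA_elems_def)

lemma LA_map_in_cells: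
  assumes N: "box_natural K K' G" and C: "C \<in> cells (LA A K) n"
  shows "LA_map A K' G C \<in> cells (LA A K') n"
proof -
  obtain t where t: "t \<in> LA_elems A K n" "C = LA_class A K t" using C cells_LA by blast
  then have "map_elem G t \<in> LA_elems A K' n"
    using N map_elem_in_LA_elems unfolding box_natural_def by blast
  then show ?thesis unfolding cells_LA t(2) LA_map_class[OF N] by blast
qed

lemma LA_map_inverse:
  assumes N: "box_natural K K' G" and N': "box_natural K' K G'"
    and inv: "\<And>n x. x \<in> cells K n \<Longrightarrow> G' n (G n x) = x" and C: "C \<in> cells (LA A K) n"
  shows "LA_map A K G' (LA_map A K' G C) = C"
proof -
  obtain t where t: "t \<in> LA_elems A K n" "C = LA_class A K t" using C cells_LA by blast
  moreover have "map_elem G' (map_elem G t) = t" using t(1) inv by (cases t) (auto simp: LA_elems_def)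
  ultimately show ?thesis by (simp add: LA_map_class[OF N] LA_map_class[OF N'])
qed

lemma LA_lps_iso:
  assumes A: "cat_of_cubes A" and N: "box_natural K K' G"
    and B: "\<And>n. bij_betw (G n) (cells K n) (cells K' n)"
    and cl: "\<And>\<psi> x. \<psi> \<in> box \<Longrightarrow> x \<in> cells K (cod_c \<psi>) \<Longrightarrow> act K \<psi> x \<in> cells K (dom_c \<psi>)"
    and L: "box_natural K (bang \<Sigma>) lab" and L': "box_natural K' (bang \<Sigma>) lab'"
    and lab: "\<And>n x. x \<in> cells K n \<Longrightarrow> lab' n (G n x) = lab n x"
  shows "lps_iso A (LA A K) (LA_lab A \<Sigma> lab) (LA A K') (LA_lab A \<Sigma> lab')"
  unfolding lps_iso_def
proof (intro exI[of _ "\<lambda>n. LA_map A K' G"] conjI allI ballI)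
  define G' where "G' n = inv_into (cells K n) (G n)" for n
  have N': "box_natural K' K G'" unfolding G'_def by (rule box_natural_inv_into[OF N B cl])
  fix n
  show "bij_betw (LA_map A K' G) (cells (LA A K) n) (cells (LA A K') n)"
  proof (rule bij_betw_byWitness[where f'="LA_map A K G'"])
    show "\<forall>C\<in>cells (LA A K) n. LA_map A K G' (LA_map A K' G C) = C"
      using LA_map_inverse[OF N N'] B unfolding G'_def by (meson bij_betw_inv_into_left)
    show "\<forall>C\<in>cells (LA A K') n. LA_map A K' G (LA_map A K G' C) = C"
      using LA_map_inverse[OF N' N] B unfolding G'_def by (meson bij_betw_inv_into_right)
  qed (use LA_map_in_cells[OF N] LA_map_in_cells[OF N'] in blast)+
next
  fix f C assume f: "f \<in> A" and C: "C \<in> cells (LA A K) (cod_c f)"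
  obtain t where t: "t \<in> LA_elems A K (cod_c f)" "C = LA_class A K t" using C cells_LA by blast
  have Gt: "map_elem G t \<in> LA_elems A K' (cod_c f)"
    using map_elem_in_LA_elems t(1) N unfolding box_natural_def by blast
  have "map_elem G (elem_act f t) = elem_act f (map_elem G t)" by (cases t) simp
  then show "LA_map A K' G (act (LA A K) f C) = act (LA A K') f (LA_map A K' G C)"
    unfolding t(2) act_LA_class(1)[OF A f t(1)] LA_map_class[OF N] act_LA_class(1)[OF A f Gt]
    by simp
next
  fix n C assume C: "C \<in> cells (LA A K) n"
  obtain t where t: "t \<in> LA_elems A K n" "C = LA_class A K t" using C cells_LA by blast
  moreover have "map_elem lab' (map_elem G t) = map_elem lab t"
    using t(1) lab by (cases t) (auto simp: LA_elems_def)
  ultimately show "LA_lab A \<Sigma> lab' n (LA_map A K' G C) = LA_lab A \<Sigma> lab n C"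
    unfolding LA_lab_eq_LA_map by (simp add: LA_map_class[OF N] LA_map_class[OF L] LA_map_class[OF L'])
qed

section \<open>The precubical set \<open>!\<Sigma>\<close>\<close>

lemma bang_simps [simp]:
  "cells (bang \<Sigma>) n = {w. length w = n \<and> set w \<subseteq> \<Sigma>}" "act (bang \<Sigma>) = bang_act"
  by (auto simp: bang_def)

definition remove_at :: "nat \<Rightarrow> 'a list \<Rightarrow> 'a list" where
  "remove_at k w = take k w @ drop (Suc k) w"

lemma length_remove_at: "k < length w \<Longrightarrow> length (remove_at k w) = length w - 1"
  by (simp add: remove_at_def)

lemma nth_remove_at:
  "k < length w \<Longrightarrow> j < length w - 1 \<Longrightarrow> remove_at k w ! j = w ! (if j < k then j else Suc j)"
  by (auto simp: remove_at_def nth_append min_def)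

lemma upt_split_at: "k < n \<Longrightarrow> [0..<n] = [0..<k] @ k # [Suc k..<n]"
  by (metis upt_add_eq_append upt_conv_Cons le_add1 le_add_diff_inverse less_imp_le zero_le)

lemma filter_upt_skip:
  assumes "k < n" "\<not> P k"
  shows "filter P [0..<n] = map (\<lambda>j. if j < k then j else Suc j) (filter (\<lambda>j. P (if j < k then j else Suc j)) [0..<n - 1])"
proof -
  let ?s = "\<lambda>j. if j < k then j else Suc j"
  have e1: "filter P [0..<n] = filter P [0..<k] @ filter P [Suc k..<n]"
    using upt_split_at[OF assms(1)] assms(2) by simp
  have e2: "[0..<n-1] = [0..<k] @ [k..<n-1]"
    using upt_add_eq_append[of 0 k "n - 1 - k"] assms by simp
  have e3: "map ?s [0..<k] = [0..<k]" by (rule map_idI) simp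
  have e4: "map ?s [k..<n-1] = [Suc k..<n]"
  proof -
    have "map ?s [k..<n-1] = map Suc [k..<n-1]" by (rule map_cong) auto
    also have "\<dots> = [Suc k..<Suc (n-1)]" by (simp add: map_Suc_upt)
    finally show ?thesis using assms by simp
  qed
  have "map ?s (filter (\<lambda>j. P (?s j)) [0..<n - 1]) = filter P (map ?s [0..<n-1])"
    by (simp add: filter_map comp_def)
  also have "\<dots> = filter P (map ?s [0..<k] @ map ?s [k..<n-1])" using e2 by simp
  also have "\<dots> = filter P [0..<k] @ filter P [Suc k..<n]" using e3 e4 by simp
  finally show ?thesis using e1 by simp
qed

lemma concat_map_singleton_filter: "concat (map (\<lambda>j. if P j then [f j] else []) xs) = map f (filter P xs)"
  by (induction xs) auto

lemma bang_act_eq_map_filter: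
  "bang_act f w = map (\<lambda>j. w ! j) (filter (\<lambda>j. \<not> const_coord f j) [0..<cod_c f])"
  unfolding bang_act_def by (simp add: concat_map_singleton_filter)

lemma not_const_coord_idc: "j < n \<Longrightarrow> \<not> const_coord (idc n) j"
proof
  assume j: "j < n" and c: "const_coord (idc n) j"
  have "replicate n True \<in> cube (dom_c (idc n))" by simp
  with c have "fun_c (idc n) (replicate n True) ! j = fun_c (idc n) (replicate n False) ! j"
    unfolding const_coord_def by (metis idc_simps(1))
  with j show False by (simp add: fun_c_idc)
qed

lemma bang_act_idc: "length w = n \<Longrightarrow> bang_act (idc n) w = w"
proof -
  assume l: "length w = n"
  have "filter (\<lambda>j. \<not> const_coord (idc n) j) [0..<n] = [0..<n]"
    using not_const_coord_idc by (simp add: filter_id_conv)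
  then show ?thesis unfolding bang_act_eq_map_filter using l map_nth[of w] by simp
qed

lemma const_coord_face_comp_c:
  assumes wf: "wf_map h" and ch: "cod_c h = n - 1" and i: "1 \<le> i" "i \<le> n"
  shows "const_coord (comp_c (face n i a) h) (i - 1)"
    and "j < n - 1 \<Longrightarrow>
         const_coord (comp_c (face n i a) h) (if j < i - 1 then j else Suc j) \<longleftrightarrow> const_coord h j"
proof -
  have F: "fun_c (comp_c (face n i a) h) v = insert_at (i - 1) a (fun_c h v)"
    and l: "length (fun_c h v) = n - 1" if "length v = dom_c h" for v
    using that wf ch by (simp_all add: fun_c_comp_c fun_c_face length_fun_c)
  have "fun_c (comp_c (face n i a) h) v ! (i - 1) = a" if "length v = dom_c h" for v
    using F[OF that] l[OF that] i nth_insert_at[of "i - 1" "fun_c h v" a] by simp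
  then show "const_coord (comp_c (face n i a) h) (i - 1)" unfolding const_coord_def by simp
  assume j: "j < n - 1"
  have "fun_c (comp_c (face n i a) h) v ! (if j < i - 1 then j else Suc j) = fun_c h v ! j"
    if "length v = dom_c h" for v
    using F[OF that] l[OF that] i j nth_insert_at_skip[of "i - 1" "fun_c h v" j a] by simp
  then show "const_coord (comp_c (face n i a) h) (if j < i - 1 then j else Suc j) \<longleftrightarrow> const_coord h j"
    unfolding const_coord_def by simp
qed

lemma bang_act_face_comp_c:
  assumes wf: "wf_map h" and ch: "cod_c h = n - 1" and i: "1 \<le> i" "i \<le> n" and lw: "length w = n"
  shows "bang_act (comp_c (face n i a) h) w = bang_act h (remove_at (i - 1) w)"
proof -
  define F where "F = comp_c (face n i a) h"
  define s where "s = (\<lambda>j. if j < i - 1 then j else Suc j)"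
  have "filter (\<lambda>j. \<not> const_coord F j) [0..<n] = map s (filter (\<lambda>j. \<not> const_coord F (s j)) [0..<n - 1])"
    unfolding s_def F_def using const_coord_face_comp_c(1)[OF wf ch i] i
    by (intro filter_upt_skip) simp_all
  also have "filter (\<lambda>j. \<not> const_coord F (s j)) [0..<n - 1] = filter (\<lambda>j. \<not> const_coord h j) [0..<n - 1]"
    unfolding s_def F_def using const_coord_face_comp_c(2)[OF wf ch i] by (intro filter_cong) auto
  finally have "bang_act F w = map (\<lambda>j. w ! s j) (filter (\<lambda>j. \<not> const_coord h j) [0..<n - 1])"
    unfolding bang_act_eq_map_filter F_def by simp
  also have "\<dots> = map (\<lambda>j. remove_at (i - 1) w ! j) (filter (\<lambda>j. \<not> const_coord h j) [0..<n - 1])"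
    using i by (intro map_cong) (auto simp: nth_remove_at lw s_def)
  finally show ?thesis unfolding bang_act_eq_map_filter F_def using ch by simp
qed

lemma bang_act_comp_c: "g \<in> box \<Longrightarrow> wf_map f \<Longrightarrow> dom_c g = cod_c f \<Longrightarrow> length w = cod_c g \<Longrightarrow>
   bang_act (comp_c g f) w = bang_act f (bang_act g w)"
proof (induction arbitrary: f w rule: box.induct)
  case (box_id n) then show ?case by (simp add: comp_c_idc_left bang_act_idc)
next
  case (box_face g i n a)
  have wg: "wf_map g" using box_face box_wf_map by blast
  have e: "comp_c (comp_c (face n i a) g) f = comp_c (face n i a) (comp_c g f)"
    using box_face by (simp add: comp_c_assoc)
  have lr: "length (remove_at (i - 1) w) = cod_c g" using box_face by (simp add: length_remove_at)
  have "bang_act (comp_c (face n i a) (comp_c g f)) w = bang_act (comp_c g f) (remove_at (i - 1) w)"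
    using box_face wg by (intro bang_act_face_comp_c) (auto simp: wf_map_comp_c)
  also have "\<dots> = bang_act f (bang_act g (remove_at (i - 1) w))" using box_face.IH[of f] box_face lr by simp
  also have "bang_act g (remove_at (i - 1) w) = bang_act (comp_c (face n i a) g) w"
    using box_face wg by (intro bang_act_face_comp_c[symmetric]) auto
  finally show ?case using e by simp
qed

lemma length_bang_act: "g \<in> box \<Longrightarrow> length w = cod_c g \<Longrightarrow> length (bang_act g w) = dom_c g"
proof (induction arbitrary: w rule: box.induct)
  case (box_id n)
  then show ?case by (simp add: bang_act_idc)
next
  case (box_face g i n a)
  have wg: "wf_map g" using box_face box_wf_map by blast
  have lr: "length (remove_at (i - 1) w) = cod_c g" using box_face by (simp add: length_remove_at)
  have "bang_act (comp_c (face n i a) g) w = bang_act g (remove_at (i - 1) w)"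
    using box_face wg by (intro bang_act_face_comp_c) auto
  then show ?case using box_face.IH lr by simp
qed

lemma set_bang_act: "length w = cod_c f \<Longrightarrow> set (bang_act f w) \<subseteq> set w"
  unfolding bang_act_eq_map_filter by auto

lemma bang_act_in_cells:
  "\<psi> \<in> box \<Longrightarrow> w \<in> cells (bang \<Sigma>) (cod_c \<psi>) \<Longrightarrow> bang_act \<psi> w \<in> cells (bang \<Sigma>) (dom_c \<psi>)"
  using length_bang_act[of \<psi> w] set_bang_act[of w \<psi>] by auto

lemma const_coord_edge_iff:
  assumes "j < length l + 1 + length r"
  shows "const_coord (edge l r) j \<longleftrightarrow> j \<noteq> length l"
proof -
  have "const_coord (edge l r) j \<longleftrightarrow> (l @ True # r) ! j = (l @ False # r) ! j"
  proof
    assume "const_coord (edge l r) j"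
    then show "(l @ True # r) ! j = (l @ False # r) ! j"
      unfolding const_coord_def by (auto dest!: bspec[of _ _ "[True]"] simp: fun_c_edge)
  next
    assume h: "(l @ True # r) ! j = (l @ False # r) ! j"
    have "(l @ hd v # r) ! j = (l @ False # r) ! j" for v :: vert
      using h by (cases "hd v") auto
    then show "const_coord (edge l r) j"
      unfolding const_coord_def by (simp add: fun_c_edge)
  qed
  also have "\<dots> \<longleftrightarrow> j \<noteq> length l"
    using assms by (auto simp: nth_append nth_Cons split: nat.split)
  finally show ?thesis .
qed

lemma bang_act_edge: "length w = length l + 1 + length r \<Longrightarrow> bang_act (edge l r) w = [w ! length l]"
proof -
  assume lw: "length w = length l + 1 + length r"
  have "filter (\<lambda>j. \<not> const_coord (edge l r) j) [0..<length l + 1 + length r] =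
        filter (\<lambda>j. j = length l) [0..<length l + 1 + length r]"
    by (rule filter_cong) (auto simp: const_coord_edge_iff)
  also have "\<dots> = [length l]"
  proof -
    have "filter (\<lambda>j. j = length l) [0..<length l] = []"
      "filter (\<lambda>j. j = length l) [Suc (length l)..<length l + 1 + length r] = []"
      by (auto simp: filter_empty_conv)
    then show ?thesis using upt_split_at[of "length l" "length l + 1 + length r"] by simp
  qed
  finally show ?thesis unfolding bang_act_eq_map_filter by simp
qed

section \<open>The labelled representable \<open>A[a\<^sub>1, \<dots>, a\<^sub>p]\<close>\<close>

lemma box_cube_simps [simp]:
  "cells (box_cube p) k = {\<phi> \<in> box. dom_c \<phi> = k \<and> cod_c \<phi> = p}"
  "act (box_cube p) f \<phi> = comp_c \<phi> f"
  by (auto simp: box_cube_def)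

lemma trunc1_simps [simp]:
  "cells (trunc1 X) k = (if k \<le> 1 then cells X k else {})" "act (trunc1 X) = act X"
  by (auto simp: trunc1_def)

text \<open>The cube of \<open>L\<^sub>A(\<box>[p]) = A[p]\<close> corresponding to \<open>f : [n] \<rightarrow> [p]\<close> in \<open>A\<close>.\<close>

definition rep_cube :: "cmap set \<Rightarrow> nat \<Rightarrow> cmap \<Rightarrow> (nat \<times> cmap \<times> cmap) set" where
  "rep_cube A p f = LA_class A (box_cube p) (p, idc p, f)"

lemma LA_class_box_cube:
  assumes A: "cat_of_cubes A" and x: "x \<in> box" "dom_c x = m" "cod_c x = p"
    and \<phi>: "\<phi> \<in> A" "cod_c \<phi> = m"
  shows "LA_class A (box_cube p) (m, x, \<phi>) = rep_cube A p (comp_c x \<phi>)"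
proof -
  have "((m, act (box_cube p) x (idc p), \<phi>), (cod_c x, idc p, comp_c x \<phi>)) \<in> LA_gen A (box_cube p)"
    by (rule LA_genI) (use x \<phi> box.box_id in auto)
  moreover have "act (box_cube p) x (idc p) = x" using comp_c_idc_left[OF box_wf_map[OF x(1)] x(3)] by simp
  ultimately show ?thesis
    unfolding rep_cube_def LA_class_eq_iff using LA_gen_in_LA_rel x by simp
qed

lemma LA_rel_box_cube_comp_c:
  assumes A: "cat_of_cubes A" and ab: "(a, b) \<in> LA_rel A (box_cube p)"
  shows "comp_c (fst (snd a)) (snd (snd a)) = comp_c (fst (snd b)) (snd (snd b))"
proof -
  define c where "c t = comp_c (fst (snd t)) (snd (snd t))" for t :: "nat \<times> cmap \<times> cmap"
  have gen: "c a' = c b'" if "(a', b') \<in> LA_gen A (box_cube p)" for a' b'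
    using that
  proof (rule LA_genE)
    fix m \<psi> x \<phi> assume e: "a' = (m, act (box_cube p) \<psi> x, \<phi>)" "b' = (cod_c \<psi>, x, comp_c \<psi> \<phi>)"
      "\<psi> \<in> box" "dom_c \<psi> = m" "x \<in> cells (box_cube p) (cod_c \<psi>)" "\<phi> \<in> A" "cod_c \<phi> = m"
    then show ?thesis
      using comp_c_assoc[OF cat_of_cubes_wf_map[OF A e(6)], of \<psi> x] by (simp add: c_def)
  qed
  have "True \<and> (c a, c b) \<in> Id\<^sup>*"
    by (rule rtrancl_invariant_map[OF ab[unfolded LA_rel_def]]) (use gen in auto)
  then show ?thesis by (simp add: c_def)
qed

lemma rep_cube_inj:
  assumes A: "cat_of_cubes A" and e: "rep_cube A p f = rep_cube A p f'"
    and f: "wf_map f" "cod_c f = p" and f': "wf_map f'" "cod_c f' = p"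
  shows "f = f'"
proof -
  have "((p, idc p, f), (p, idc p, f')) \<in> LA_rel A (box_cube p)"
    using e unfolding rep_cube_def LA_class_eq_iff .
  then have "comp_c (idc p) f = comp_c (idc p) f'" using LA_rel_box_cube_comp_c[OF A] by (metis fst_conv snd_conv)
  then show ?thesis using comp_c_idc_left f f' by metis
qed

lemma cells_LA_box_cube:
  assumes A: "cat_of_cubes A"
  shows "cells (LA A (box_cube p)) n = rep_cube A p ` {f \<in> A. dom_c f = n \<and> cod_c f = p}"
proof -
  have "LA_class A (box_cube p) t \<in> rep_cube A p ` {f \<in> A. dom_c f = n \<and> cod_c f = p}"
    if t: "t \<in> LA_elems A (box_cube p) n" for t
  proof -
    obtain m x \<phi> where tt: "t = (m, x, \<phi>)" by (cases t)
    with t have h: "x \<in> box" "dom_c x = m" "cod_c x = p" "\<phi> \<in> A" "cod_c \<phi> = m" "dom_c \<phi> = n"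
      by (auto simp: LA_elems_def)
    moreover have "comp_c x \<phi> \<in> A"
      using cat_of_cubes_comp_c[OF A h(4) cat_of_cubes_boxD[OF A h(1)]] h by simp
    ultimately show ?thesis using LA_class_box_cube[OF A h(1-5)] tt by auto
  qed
  moreover have "rep_cube A p f \<in> LA_class A (box_cube p) ` LA_elems A (box_cube p) n"
    if "f \<in> A" "dom_c f = n" "cod_c f = p" for f
    unfolding rep_cube_def using that box.box_id by (auto simp: LA_elems_def)
  ultimately show ?thesis unfolding cells_LA by blast
qed

lemma bij_betw_rep_cube:
  assumes A: "cat_of_cubes A"
  shows "bij_betw (rep_cube A p) {f \<in> A. dom_c f = n \<and> cod_c f = p} (cells (LA A (box_cube p)) n)"
  unfolding bij_betw_def cells_LA_box_cube[OF A]
proof (intro conjI inj_onI refl)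
  fix f f' assume "f \<in> {f \<in> A. dom_c f = n \<and> cod_c f = p}" "f' \<in> {f \<in> A. dom_c f = n \<and> cod_c f = p}"
    and "rep_cube A p f = rep_cube A p f'"
  then show "f = f'" using rep_cube_inj[OF A] cat_of_cubes_wf_map[OF A] by blast
qed

lemma act_rep_cube:
  assumes A: "cat_of_cubes A" and \<delta>: "\<delta> \<in> A" and f: "f \<in> A" "dom_c f = cod_c \<delta>" "cod_c f = p"
  shows "act (LA A (box_cube p)) \<delta> (rep_cube A p f) = rep_cube A p (comp_c f \<delta>)"
proof -
  have t: "(p, idc p, f) \<in> LA_elems A (box_cube p) (cod_c \<delta>)"
    using f box.box_id by (simp add: LA_elems_def)
  show ?thesis unfolding rep_cube_def act_LA_class(1)[OF A \<delta> t] by simp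
qed

lemma box_natural_box_lab:
  assumes a: "length a = p" "set a \<subseteq> \<Sigma>"
  shows "box_natural (box_cube p) (bang \<Sigma>) (box_lab a)"
  unfolding box_natural_def
proof (intro conjI allI ballI)
  fix n x assume "x \<in> cells (box_cube p) n"
  then show "box_lab a n x \<in> cells (bang \<Sigma>) n"
    using bang_act_in_cells[of x a \<Sigma>] a by (simp add: box_lab_def)
next
  fix \<psi> x assume "\<psi> \<in> box" "x \<in> cells (box_cube p) (cod_c \<psi>)"
  then show "box_lab a (dom_c \<psi>) (act (box_cube p) \<psi> x) = act (bang \<Sigma>) \<psi> (box_lab a (cod_c \<psi>) x)"
    using bang_act_comp_c[of x \<psi> a] a box_wf_map by (simp add: box_lab_def)
qed

lemma LA_lab_rep_cube:
  assumes "length a = p" "set a \<subseteq> \<Sigma>"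
  shows "LA_lab A \<Sigma> (box_lab a) n (rep_cube A p f) =
         sh_class A (LA A (bang \<Sigma>)) n (LA_class A (bang \<Sigma>) (p, a, f))"
  unfolding LA_lab_eq_LA_map rep_cube_def LA_map_class[OF box_natural_box_lab[OF assms]]
  using bang_act_idc[OF assms(1)] by (simp add: box_lab_def)

section \<open>Cubes of a 1-coskeleton over the 1-skeleton of a cube\<close>

lemma cosk_simps [simp]:
  "cells (cosk A Y ly S) n = cosk_cells A Y ly S n" "act (cosk A Y ly S) = cosk_act A Y S"
  by (auto simp: cosk_def)

lemma cosk_cellsD:
  assumes "x \<in> cosk_cells A Y ly S n"
  shows "snd x \<in> cells S n"
    and "\<And>\<phi>. \<not> (\<phi> \<in> A \<and> cod_c \<phi> = n \<and> dom_c \<phi> \<le> 1) \<Longrightarrow> fst x \<phi> = undefined"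
    and "\<And>\<phi>. \<phi> \<in> A \<Longrightarrow> cod_c \<phi> = n \<Longrightarrow> dom_c \<phi> \<le> 1 \<Longrightarrow>
           ly (dom_c \<phi>) (fst x \<phi>) = act S \<phi> (snd x)"
  using assms unfolding cosk_cells_def by auto

text \<open>\<open>Y\<close> is a copy, via \<open>\<Psi>\<close>, of the 1-skeleton of \<open>\<box>[p]\<close>, regarded as a 1-dimensional
  \<open>A\<close>-set. A map \<open>u\<close> from the maps \<open>[k] \<rightarrow> [n]\<close>, \<open>k \<le> 1\<close>, of \<open>A\<close> to cubes of \<open>Y\<close> compatible
  with the action (the data of an \<open>n\<close>-cube of \<open>cosk\<^sub>1 Y\<close>) is induced by a unique
  adjacency-preserving \<open>g : [n] \<rightarrow> [p]\<close>.\<close>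

locale cube_skeleton =
  fixes A :: "cmap set" and Y :: "'y psh" and \<Psi> :: "cmap \<Rightarrow> 'y" and p :: nat
  assumes cat: "cat_of_cubes A"
    and cells_Y: "\<And>k. k \<le> 1 \<Longrightarrow> cells Y k = \<Psi> ` {\<psi>\<in>box. dom_c \<psi> = k \<and> cod_c \<psi> = p}"
    and inj_\<Psi>: "inj_on \<Psi> {\<psi>\<in>box. dom_c \<psi> \<le> 1 \<and> cod_c \<psi> = p}"
    and act_\<Psi>: "\<And>\<delta> \<psi>. \<delta> \<in> A \<Longrightarrow> \<psi> \<in> box \<Longrightarrow> dom_c \<psi> \<le> 1 \<Longrightarrow> cod_c \<psi> = p \<Longrightarrow>
                 cod_c \<delta> = dom_c \<psi> \<Longrightarrow> act Y \<delta> (\<Psi> \<psi>) = \<Psi> (comp_c \<psi> \<delta>)"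
begin

definition skeleton_map :: "nat \<Rightarrow> (cmap \<Rightarrow> 'y) \<Rightarrow> bool" where
  "skeleton_map n u \<longleftrightarrow>
     (\<forall>\<phi>\<in>A. cod_c \<phi> = n \<longrightarrow> dom_c \<phi> \<le> 1 \<longrightarrow> u \<phi> \<in> cells Y (dom_c \<phi>))
   \<and> (\<forall>\<delta>\<in>A. \<forall>\<phi>\<in>A. dom_c \<delta> \<le> 1 \<longrightarrow> cod_c \<delta> = dom_c \<phi> \<longrightarrow> dom_c \<phi> \<le> 1 \<longrightarrow> cod_c \<phi> = n \<longrightarrow>
        u (comp_c \<phi> \<delta>) = act Y \<delta> (u \<phi>))"

definition induced_by :: "nat \<Rightarrow> (cmap \<Rightarrow> 'y) \<Rightarrow> cmap \<Rightarrow> bool" where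
  "induced_by n u g \<longleftrightarrow> adj_pres g \<and> dom_c g = n \<and> cod_c g = p
     \<and> (\<forall>\<phi>\<in>A. cod_c \<phi> = n \<longrightarrow> dom_c \<phi> \<le> 1 \<longrightarrow> u \<phi> = \<Psi> (comp_c g \<phi>))"

definition induced_map :: "nat \<Rightarrow> (cmap \<Rightarrow> 'y) \<Rightarrow> cmap" where
  "induced_map n u = mk_map n p (\<lambda>v. SOME w. length w = p \<and> u (vertex_map n v) = \<Psi> (vertex_map p w))"

lemma vertex_map_in_A: "length v = n \<Longrightarrow> vertex_map n v \<in> A"
  using cat_of_cubes_boxD[OF cat vertex_map_in_box] .

lemma \<Psi>_vertex_map_inj:
  "\<Psi> (vertex_map p v) = \<Psi> (vertex_map p w) \<Longrightarrow> length v = p \<Longrightarrow> length w = p \<Longrightarrow> v = w"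
proof -
  assume "\<Psi> (vertex_map p v) = \<Psi> (vertex_map p w)" "length v = p" "length w = p"
  then have "vertex_map p v = vertex_map p w"
    by (intro inj_onD[OF inj_\<Psi>]) (simp_all add: vertex_map_in_box)
  then show "v = w" by (rule vertex_map_inj)
qed

lemma induced_map_vertex:
  assumes u: "skeleton_map n u" and v: "length v = n"
  shows "u (vertex_map n v) = \<Psi> (vertex_map p (fun_c (induced_map n u) v))"
    and "length (fun_c (induced_map n u) v) = p"
proof -
  have "u (vertex_map n v) \<in> cells Y 0"
    using u vertex_map_in_A[OF v] unfolding skeleton_map_def by auto
  then obtain \<psi> where \<psi>: "\<psi> \<in> box" "dom_c \<psi> = 0" "cod_c \<psi> = p" "u (vertex_map n v) = \<Psi> \<psi>"
    using cells_Y[of 0] by auto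
  then have "length (fun_c \<psi> []) = p \<and> u (vertex_map n v) = \<Psi> (vertex_map p (fun_c \<psi> []))"
    using dom_0_eq_vertex_map[OF box_wf_map[OF \<psi>(1)] \<psi>(2)] length_fun_c[OF box_wf_map[OF \<psi>(1)]]
    by simp
  then have "\<exists>w. length w = p \<and> u (vertex_map n v) = \<Psi> (vertex_map p w)" by blast
  from someI_ex[OF this]
  show "u (vertex_map n v) = \<Psi> (vertex_map p (fun_c (induced_map n u) v))"
    and "length (fun_c (induced_map n u) v) = p"
    unfolding induced_map_def using v by simp_all
qed

lemma wf_map_induced_map:
  assumes u: "skeleton_map n u"
  shows "wf_map (induced_map n u)"
proof -
  have "wf_map (mk_map n p (fun_c (induced_map n u)))"
    using induced_map_vertex(2)[OF u] by (intro wf_map_mk_map)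
  moreover have "mk_map n p (fun_c (induced_map n u)) = induced_map n u"
    unfolding induced_map_def by (intro mk_map_cong) simp
  ultimately show ?thesis by simp
qed

lemma comp_c_induced_map_vertex_map:
  "skeleton_map n u \<Longrightarrow> length v = n \<Longrightarrow>
   comp_c (induced_map n u) (vertex_map n v) = vertex_map p (fun_c (induced_map n u) v)"
  using comp_c_vertex_map[OF wf_map_induced_map] by (simp add: induced_map_def)

lemma induced_map_edge:
  assumes u: "skeleton_map n u" and \<phi>: "\<phi> \<in> A" "cod_c \<phi> = n" "dom_c \<phi> = 1"
  obtains e where "e \<in> box" "u \<phi> = \<Psi> e" "comp_c (induced_map n u) \<phi> = e"
proof -
  let ?g = "induced_map n u"
  have wf\<phi>: "wf_map \<phi>" using cat_of_cubes_wf_map[OF cat \<phi>(1)] .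
  have "u \<phi> \<in> cells Y 1" using u \<phi> unfolding skeleton_map_def by auto
  then obtain e where e: "e \<in> box" "dom_c e = 1" "cod_c e = p" "u \<phi> = \<Psi> e"
    using cells_Y[of 1] by auto
  have wfe: "wf_map e" using box_wf_map e by blast
  txt \<open>\<open>e\<close> and \<open>g \<circ> \<phi>\<close> agree on both vertices of \<open>[1]\<close>.\<close>
  have ends: "fun_c e [b] = fun_c ?g (fun_c \<phi> [b])" for b
  proof -
    have vb: "vertex_map 1 [b] \<in> A" using vertex_map_in_A[of "[b]" 1] by simp
    have lb: "length (fun_c \<phi> [b]) = n" using length_fun_c[OF wf\<phi>, of "[b]"] \<phi> by simp
    have "\<Psi> (vertex_map p (fun_c e [b])) = act Y (vertex_map 1 [b]) (u \<phi>)"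
      using act_\<Psi>[OF vb e(1)] e comp_c_vertex_map[OF wfe, of "[b]"] by simp
    also have "\<dots> = u (comp_c \<phi> (vertex_map 1 [b]))"
      using u vb \<phi> unfolding skeleton_map_def by auto
    also have "\<dots> = \<Psi> (vertex_map p (fun_c ?g (fun_c \<phi> [b])))"
      using comp_c_vertex_map[OF wf\<phi>, of "[b]"] \<phi> induced_map_vertex(1)[OF u lb] by simp
    finally show ?thesis
      using \<Psi>_vertex_map_inj length_fun_c[OF wfe, of "[b]"] e induced_map_vertex(2)[OF u lb] by simp
  qed
  have "comp_c ?g \<phi> = e"
  proof (rule cmap_eqI)
    fix v :: vert assume "length v = dom_c (comp_c ?g \<phi>)"
    with \<phi>(3) have "v = [False] \<or> v = [True]" by (metis comp_c_simps(1) length_1_vert)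
    then show "fun_c (comp_c ?g \<phi>) v = fun_c e v" using ends \<phi>(3) by (auto simp: fun_c_comp_c)
  next
    show "wf_map (comp_c ?g \<phi>)"
      using wf_map_induced_map[OF u] wf\<phi> \<phi> by (simp add: wf_map_comp_c induced_map_def)
  qed (use wfe e \<phi> in \<open>simp_all add: induced_map_def\<close>)
  with e show ?thesis using that by blast
qed

lemma induced_map_low:
  assumes u: "skeleton_map n u" and \<phi>: "\<phi> \<in> A" "cod_c \<phi> = n" "dom_c \<phi> \<le> 1"
  shows "u \<phi> = \<Psi> (comp_c (induced_map n u) \<phi>)" and "comp_c (induced_map n u) \<phi> \<in> box"
proof -
  let ?g = "induced_map n u"
  have wf\<phi>: "wf_map \<phi>" using cat_of_cubes_wf_map[OF cat \<phi>(1)] .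
  have "u \<phi> = \<Psi> (comp_c ?g \<phi>) \<and> comp_c ?g \<phi> \<in> box"
  proof (cases "dom_c \<phi> = 0")
    case True
    then have e: "\<phi> = vertex_map n (fun_c \<phi> [])" and l: "length (fun_c \<phi> []) = n"
      using dom_0_eq_vertex_map[OF wf\<phi>] length_fun_c[OF wf\<phi>, of "[]"] \<phi> by simp_all
    then show ?thesis
      using induced_map_vertex[OF u l] comp_c_induced_map_vertex_map[OF u l] vertex_map_in_box
      by metis
  next
    case False
    with \<phi> have "dom_c \<phi> = 1" by simp
    with induced_map_edge[OF u \<phi>(1,2)] show ?thesis by metis
  qed
  then show "u \<phi> = \<Psi> (comp_c ?g \<phi>)" "comp_c ?g \<phi> \<in> box" by simp_all
qed

text \<open>Adjacency preservation is checked on edges, whose images are edges since they lie in \<open>\<box>\<close>.\<close>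

lemma adj_pres_induced_map:
  assumes u: "skeleton_map n u"
  shows "adj_pres (induced_map n u)"
proof -
  let ?g = "induced_map n u"
  have edge_step: "less_v (fun_c ?g x) (fun_c ?g y) \<and> dist_v (fun_c ?g x) (fun_c ?g y) = 1"
    if xy: "length x = n" "length y = n" "dist_v x y = 1" "less_v x y" for x y
  proof -
    obtain l r l' r' where lr: "x = l @ False # r" "y = l' @ True # r'" "length l = length l'"
      using less_v_cases[OF xy(4)] by blast
    with xy have "l = l'" "r = r'" using dist_v_eq_0_iff by (auto simp: dist_v_append)
    with lr xy have "x = fun_c (edge l r) [False]" "y = fun_c (edge l r) [True]" "cod_c (edge l r) = n"
      by (simp_all add: fun_c_edge)
    moreover have "adj_pres (comp_c ?g (edge l r))"
      using induced_map_low(2)[OF u cat_of_cubes_boxD[OF cat edge_in_box]] calculation(3)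
      by (simp add: box_adj_pres)
    then have "less_v (fun_c (comp_c ?g (edge l r)) [False]) (fun_c (comp_c ?g (edge l r)) [True])"
      "dist_v (fun_c (comp_c ?g (edge l r)) [False]) (fun_c (comp_c ?g (edge l r)) [True]) = 1"
      using less_v_flip_one unfolding adj_pres_def by simp_all
    ultimately show ?thesis by (simp add: fun_c_comp_c)
  qed
  have "less_v (fun_c ?g x) (fun_c ?g y)" if "length x = n" "length y = n" "less_v x y" for x y
    using less_v_preserved_if_edges[of n "fun_c ?g"] edge_step that by blast
  moreover have "dist_v (fun_c ?g x) (fun_c ?g y) = 1"
    if xy: "length x = n" "length y = n" "dist_v x y = 1" for x y
  proof -
    obtain l r c where lr: "x = l @ c # r" "y = l @ (\<not> c) # r"
      using xy dist_v_1_cases by (metis)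
    then have "less_v x y \<or> less_v y x"
      by (cases c) (auto simp: less_v_def leq_v_append leq_v_refl)
    then show ?thesis using edge_step xy dist_v_commute by metis
  qed
  ultimately show ?thesis using wf_map_induced_map[OF u] unfolding adj_pres_def
    by (simp add: induced_map_def)
qed

lemma induced_by_induced_map: "skeleton_map n u \<Longrightarrow> induced_by n u (induced_map n u)"
  unfolding induced_by_def using adj_pres_induced_map induced_map_low(1)
  by (simp add: induced_map_def)

lemma induced_by_unique:
  assumes g: "induced_by n u g" and g': "induced_by n u g'"
  shows "g = g'"
proof (rule cmap_eqI)
  show wf: "wf_map g" "wf_map g'" and "dom_c g = dom_c g'" "cod_c g = cod_c g'"
    using g g' unfolding induced_by_def adj_pres_def by auto
  fix v :: vert assume "length v = dom_c g"
  with g have v: "length v = n" using induced_by_def by simp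
  with g g' have "\<Psi> (comp_c g (vertex_map n v)) = \<Psi> (comp_c g' (vertex_map n v))"
    unfolding induced_by_def using vertex_map_in_A by auto
  moreover have "comp_c g (vertex_map n v) = vertex_map p (fun_c g v)"
    "comp_c g' (vertex_map n v) = vertex_map p (fun_c g' v)"
    using comp_c_vertex_map[OF wf(1), of v] comp_c_vertex_map[OF wf(2), of v] g g' v
    unfolding induced_by_def by simp_all
  moreover have "length (fun_c g v) = p" "length (fun_c g' v) = p"
    using length_fun_c[OF wf(1), of v] length_fun_c[OF wf(2), of v] g g' v
    unfolding induced_by_def by simp_all
  ultimately show "fun_c g v = fun_c g' v" using \<Psi>_vertex_map_inj by simp
qed

lemma skeleton_map_comp_c:
  assumes g: "adj_pres g" "dom_c g = n" "cod_c g = p"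
  shows "skeleton_map n (\<lambda>\<phi>. \<Psi> (comp_c g \<phi>))"
  unfolding skeleton_map_def
proof (intro conjI ballI impI)
  fix \<phi> assume "\<phi> \<in> A" "cod_c \<phi> = n" "dom_c \<phi> \<le> 1"
  then show "\<Psi> (comp_c g \<phi>) \<in> cells Y (dom_c \<phi>)"
    using cells_Y[of "dom_c \<phi>"] cat_of_cubes_comp_low[OF cat g(1)] g by auto
next
  fix \<delta> \<phi> assume h: "\<delta> \<in> A" "\<phi> \<in> A" "dom_c \<delta> \<le> 1" "cod_c \<delta> = dom_c \<phi>" "dom_c \<phi> \<le> 1" "cod_c \<phi> = n"
  then have "comp_c g (comp_c \<phi> \<delta>) = comp_c (comp_c g \<phi>) \<delta>"
    using comp_c_assoc[OF cat_of_cubes_wf_map[OF cat h(1)]] g by simp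
  then show "\<Psi> (comp_c g (comp_c \<phi> \<delta>)) = act Y \<delta> (\<Psi> (comp_c g \<phi>))"
    using act_\<Psi>[OF h(1) cat_of_cubes_comp_low[OF cat g(1) h(2)]] h g by simp
qed

lemma induced_by_skeleton_map: "induced_by n u g \<Longrightarrow> skeleton_map n u"
  using skeleton_map_comp_c[of g n] cat_of_cubes_comp_c[OF cat]
  unfolding induced_by_def skeleton_map_def by auto

lemma induced_map_eq: "induced_by n u g \<Longrightarrow> induced_map n u = g"
  using induced_by_unique induced_by_induced_map induced_by_skeleton_map by blast

lemma cosk_cells_skeleton_map: "x \<in> cosk_cells A Y ly S n \<Longrightarrow> skeleton_map n (fst x)"
  unfolding cosk_cells_def skeleton_map_def by auto

end

section \<open>Non-twisted maps\<close>

lemma distinct_if_count_list_le_1: "(\<And>i. count_list xs i \<le> 1) \<Longrightarrow> distinct xs"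
proof (induction xs)
  case (Cons x xs)
  have "count_list xs x = 0" using Cons.prems[of x] by simp
  moreover have "count_list xs i \<le> 1" for i using Cons.prems[of i] by (simp split: if_splits)
  ultimately show ?case using Cons.IH count_list_0_iff by fastforce
qed simp

lemma first_occ_increasing_eq_upt:
  assumes dis: "distinct is" and set: "set is = {0..<n}"
    and ord: "\<And>i. Suc i < n \<Longrightarrow> first_occ is i < first_occ is (Suc i)"
  shows "is = [0..<n]"
proof -
  have len: "length is = n" using distinct_card[OF dis] set by simp
  define pos where "pos i = first_occ is i" for i
  have posp: "pos i < n \<and> is ! pos i = i" if "i < n" for i
  proof -
    have "\<exists>j. j < length is \<and> is ! j = i" using that set in_set_conv_nth[of i "is"] by auto
    then have "pos i < length is \<and> is ! pos i = i"
      unfolding pos_def first_occ_def by (rule LeastI_ex)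
    then show ?thesis using len by simp
  qed
  have ge: "i < n \<longrightarrow> i \<le> pos i" for i
    by (induction i) (use ord pos_def in fastforce)+
  have le: "k < n \<longrightarrow> pos (n - 1 - k) \<le> n - 1 - k" for k
  proof (induction k)
    case 0
    then show ?case using posp[of "n - 1"] by auto
  next
    case (Suc k)
    show ?case
    proof
      assume k: "Suc k < n"
      then have "pos (n - 1 - Suc k) < pos (Suc (n - 1 - Suc k))" using ord unfolding pos_def by simp
      moreover have "Suc (n - 1 - Suc k) = n - 1 - k" using k by simp
      ultimately show "pos (n - 1 - Suc k) \<le> n - 1 - Suc k" using Suc.IH k by simp
    qed
  qed
  have "pos i = i" if "i < n" for i
    using le[of "n - 1 - i"] ge[of i] that by simp
  then show ?thesis by (intro nth_equalityI) (use len posp in auto)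
qed

text \<open>Flipping coordinate \<open>i\<close> of \<open>v\<close> changes \<open>map ((!) v) is\<close> in \<open>count_list is i\<close> places, so
  adjacency preservation forbids repetitions in \<open>is\<close>.\<close>

lemma count_list_le_1_if_adj_pres:
  assumes g: "adj_pres g" "dom_c g = n" and \<psi>: "\<psi> \<in> box" "dom_c \<psi> = length is"
    and set: "set is = {0..<n}"
    and eq: "\<And>v. length v = n \<Longrightarrow> fun_c g v = fun_c \<psi> (map (\<lambda>i. v ! i) is)"
  shows "count_list is i \<le> 1"
proof (cases "i < n")
  case True
  define v0 :: vert where "v0 = replicate i False @ False # replicate (n - 1 - i) False"
  define v1 :: vert where "v1 = replicate i False @ True # replicate (n - 1 - i) False"
  have l: "length v0 = n" "length v1 = n" using True by (auto simp: v0_def v1_def)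
  have "dist_v v0 v1 = 1" by (simp add: v0_def v1_def dist_v_append)
  then have "dist_v (fun_c \<psi> (map (\<lambda>i. v0 ! i) is)) (fun_c \<psi> (map (\<lambda>i. v1 ! i) is)) = 1"
    using g l eq unfolding adj_pres_def by auto
  moreover have "dist_v (fun_c \<psi> (map (\<lambda>i. v0 ! i) is)) (fun_c \<psi> (map (\<lambda>i. v1 ! i) is))
     = dist_v (map (\<lambda>i. v0 ! i) is) (map (\<lambda>i. v1 ! i) is)"
    using box_order_isometry[OF \<psi>(1)] \<psi>(2) unfolding order_isometry_def by simp
  moreover have "filter (\<lambda>j. v0 ! j \<noteq> v1 ! j) is = filter ((=) i) is"
  proof (rule filter_cong)
    fix j assume "j \<in> set is"
    then have "j < n" using set by simp
    then show "(v0 ! j \<noteq> v1 ! j) = (i = j)" using True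
      by (auto simp: v0_def v1_def nth_append nth_Cons split: nat.split)
  qed simp
  ultimately show ?thesis by (simp add: dist_v_map count_list_eq_length_filter)
next
  case False
  then show ?thesis using set by simp
qed

lemma non_twisted_adj_pres_in_box:
  assumes g: "adj_pres g" "dom_c g = n" "cod_c g = p"
    and nt: "non_twisted n p h" and hv: "\<And>v. length v = n \<Longrightarrow> h v = fun_c g v"
  shows "g \<in> box"
proof -
  obtain \<psi> "is" where \<psi>: "\<psi> \<in> box" "dom_c \<psi> = length is" "cod_c \<psi> = p" "set is = {0..<n}"
    and ord: "\<forall>i. Suc i < n \<longrightarrow> first_occ is i < first_occ is (Suc i)"
    and eq: "\<forall>v \<in> cube n. h v = fun_c \<psi> (map (\<lambda>i. v ! i) is)"
    using nt unfolding non_twisted_def by blast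
  have "distinct is"
    using count_list_le_1_if_adj_pres[OF g(1,2) \<psi>(1,2,4)] eq hv
    by (intro distinct_if_count_list_le_1) simp
  then have "is = [0..<n]" using first_occ_increasing_eq_upt \<psi>(4) ord by blast
  have "g = \<psi>"
  proof (rule cmap_eqI)
    fix v :: vert assume "length v = dom_c g"
    with g have l: "length v = n" by simp
    then have "h v = fun_c \<psi> (map (\<lambda>i. v ! i) is)" using eq by simp
    then show "fun_c g v = fun_c \<psi> v" using hv[OF l] \<open>is = [0..<n]\<close> map_nth[of v] l by simp
  qed (use g \<psi> box_wf_map \<open>is = [0..<n]\<close> adj_pres_def in auto)
  then show ?thesis using \<psi> by simp
qed

section \<open>\<open>L\<^sub>A\<close> of the directed coskeleton is \<open>A[a\<^sub>1, \<dots>, a\<^sub>p]\<close>\<close>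

locale directed_cosk =
  fixes \<Sigma> :: "'s set" and a :: "'s list"
  assumes a: "set a \<subseteq> \<Sigma>"
begin

abbreviation "p \<equiv> length a"

sublocale box_skel: cube_skeleton box "trunc1 (box_cube p)" id p
  by unfold_locales (simp_all add: cat_of_cubes_box)

abbreviation COSK_cells :: "nat \<Rightarrow> ((cmap \<Rightarrow> cmap) \<times> 's list) set" where
  "COSK_cells n \<equiv> cells (COSK_box \<Sigma> a) n"

lemma mem_COSK_cells: "x \<in> COSK_cells n \<longleftrightarrow> x \<in> cosk_cells box (trunc1 (box_cube p)) (box_lab a) (bang \<Sigma>) n
    \<and> (n \<le> 1 \<or> non_twisted n p (x0 (\<lambda>\<phi>. fun_c \<phi> []) n x))"
  by (simp add: COSK_box_def COSK_def)

lemma act_COSK_box: "act (COSK_box \<Sigma> a) = cosk_act box (trunc1 (box_cube p)) (bang \<Sigma>)"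
  by (simp add: COSK_box_def COSK_def)

definition cube_map :: "nat \<Rightarrow> (cmap \<Rightarrow> cmap) \<times> 's list \<Rightarrow> cmap" where
  "cube_map n x = box_skel.induced_map n (fst x)"

lemma induced_by_cube_map: "x \<in> COSK_cells n \<Longrightarrow> box_skel.induced_by n (fst x) (cube_map n x)"
  unfolding cube_map_def mem_COSK_cells
  by (intro box_skel.induced_by_induced_map box_skel.cosk_cells_skeleton_map) blast

lemma cube_map_in_box:
  assumes x: "x \<in> COSK_cells n"
  shows "cube_map n x \<in> box"
proof -
  have q: "box_skel.induced_by n (fst x) (cube_map n x)" using induced_by_cube_map[OF x] .
  then have g: "adj_pres (cube_map n x)" "dom_c (cube_map n x) = n" "cod_c (cube_map n x) = p"
    unfolding box_skel.induced_by_def by auto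
  show "cube_map n x \<in> box"
  proof (cases "n \<le> 1")
    case True
    then show ?thesis using adj_pres_dom_le_1_in_box g by simp
  next
    case False
    then have nt: "non_twisted n p (x0 (\<lambda>\<phi>. fun_c \<phi> []) n x)" using x mem_COSK_cells by blast
    show ?thesis
    proof (rule non_twisted_adj_pres_in_box[OF g nt])
      fix v :: vert assume v: "length v = n"
      have "fst x (vertex_map n v) = comp_c (cube_map n x) (vertex_map n v)"
        using q vertex_map_in_box[OF v] unfolding box_skel.induced_by_def by simp
      also have "\<dots> = vertex_map p (fun_c (cube_map n x) v)"
        using comp_c_vertex_map[of "cube_map n x" v] g v adj_pres_def by simp
      finally show "x0 (\<lambda>\<phi>. fun_c \<phi> []) n x v = fun_c (cube_map n x) v"
        unfolding x0_def vertex_map_def[symmetric] by simp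
    qed
  qed
qed

lemma cube_map_dom_cod: "x \<in> COSK_cells n \<Longrightarrow> dom_c (cube_map n x) = n \<and> cod_c (cube_map n x) = p"
  using induced_by_cube_map unfolding box_skel.induced_by_def by blast

text \<open>The inverse of \<open>cube_map\<close>.\<close>

definition COSK_cube :: "nat \<Rightarrow> cmap \<Rightarrow> (cmap \<Rightarrow> cmap) \<times> 's list" where
  "COSK_cube n \<psi> = (\<lambda>\<phi>. if \<phi> \<in> box \<and> cod_c \<phi> = n \<and> dom_c \<phi> \<le> 1 then comp_c \<psi> \<phi> else undefined,
                     bang_act \<psi> a)"

lemma COSK_cube_in_cosk_cells:
  assumes \<psi>: "\<psi> \<in> box" "dom_c \<psi> = n" "cod_c \<psi> = p"
  shows "COSK_cube n \<psi> \<in> cosk_cells box (trunc1 (box_cube p)) (box_lab a) (bang \<Sigma>) n"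
  unfolding cosk_cells_def COSK_cube_def
proof (simp only: mem_Collect_eq split_conv, intro conjI allI ballI impI)
  show "bang_act \<psi> a \<in> cells (bang \<Sigma>) n" using bang_act_in_cells[OF \<psi>(1), of a \<Sigma>] a \<psi> by simp
next
  fix \<phi> assume "\<not> (\<phi> \<in> box \<and> cod_c \<phi> = n \<and> dom_c \<phi> \<le> 1)"
  then show "(if \<phi> \<in> box \<and> cod_c \<phi> = n \<and> dom_c \<phi> \<le> 1 then comp_c \<psi> \<phi> else undefined) = undefined"
    by (rule if_not_P)
next
  fix \<phi> assume h: "\<phi> \<in> box" "cod_c \<phi> = n" "dom_c \<phi> \<le> 1"
  show "(if \<phi> \<in> box \<and> cod_c \<phi> = n \<and> dom_c \<phi> \<le> 1 then comp_c \<psi> \<phi> else undefined)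
          \<in> cells (trunc1 (box_cube p)) (dom_c \<phi>)"
    using h box_comp_c[OF \<psi>(1) h(1)] \<psi> by simp
  show "box_lab a (dom_c \<phi>) (if \<phi> \<in> box \<and> cod_c \<phi> = n \<and> dom_c \<phi> \<le> 1 then comp_c \<psi> \<phi> else undefined) =
      act (bang \<Sigma>) \<phi> (bang_act \<psi> a)"
    using h bang_act_comp_c[OF \<psi>(1) box_wf_map[OF h(1)], of a] \<psi> by (simp add: box_lab_def)
next
  fix \<delta> \<phi> assume h: "\<delta> \<in> box" "\<phi> \<in> box" "dom_c \<delta> \<le> 1" "cod_c \<delta> = dom_c \<phi>" "dom_c \<phi> \<le> 1" "cod_c \<phi> = n"
  have "comp_c \<phi> \<delta> \<in> box" using box_comp_c[OF h(2) h(1)] h by simp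
  moreover have "comp_c \<psi> (comp_c \<phi> \<delta>) = comp_c (comp_c \<psi> \<phi>) \<delta>"
    using comp_c_assoc[OF box_wf_map[OF h(1)]] h by simp
  ultimately show "(if comp_c \<phi> \<delta> \<in> box \<and> cod_c (comp_c \<phi> \<delta>) = n \<and> dom_c (comp_c \<phi> \<delta>) \<le> 1
                     then comp_c \<psi> (comp_c \<phi> \<delta>) else undefined) =
       act (trunc1 (box_cube p)) \<delta> (if \<phi> \<in> box \<and> cod_c \<phi> = n \<and> dom_c \<phi> \<le> 1 then comp_c \<psi> \<phi> else undefined)"
    using h by simp
qed

lemma non_twisted_COSK_cube:
  assumes \<psi>: "\<psi> \<in> box" "dom_c \<psi> = n" "cod_c \<psi> = p"
  shows "non_twisted n p (x0 (\<lambda>\<phi>. fun_c \<phi> []) n (COSK_cube n \<psi>))"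
proof -
  have fo: "first_occ [0..<n] i = i" if "i < n" for i
    unfolding first_occ_def using that by (intro Least_equality) auto
  have "x0 (\<lambda>\<phi>. fun_c \<phi> []) n (COSK_cube n \<psi>) v = fun_c \<psi> (map (\<lambda>i. v ! i) [0..<n])"
    if "v \<in> cube n" for v
  proof -
    have "vertex_map n v \<in> box" using that vertex_map_in_box[of v n] by simp
    then have "fst (COSK_cube n \<psi>) (vertex_map n v) = vertex_map p (fun_c \<psi> v)"
      using comp_c_vertex_map[OF box_wf_map[OF \<psi>(1)], of v] that \<psi> by (simp add: COSK_cube_def)
    then show ?thesis using that map_nth[of v] unfolding x0_def vertex_map_def[symmetric] by simp
  qed
  then show ?thesis
    unfolding non_twisted_def using \<psi> fo by (intro exI[of _ \<psi>] exI[of _ "[0..<n]"]) auto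
qed

lemma COSK_cube_in_COSK_cells:
  "\<psi> \<in> box \<Longrightarrow> dom_c \<psi> = n \<Longrightarrow> cod_c \<psi> = p \<Longrightarrow> COSK_cube n \<psi> \<in> COSK_cells n"
  unfolding mem_COSK_cells using COSK_cube_in_cosk_cells non_twisted_COSK_cube by blast

lemma cube_map_COSK_cube:
  assumes \<psi>: "\<psi> \<in> box" "dom_c \<psi> = n" "cod_c \<psi> = p"
  shows "cube_map n (COSK_cube n \<psi>) = \<psi>"
proof -
  have "box_skel.induced_by n (fst (COSK_cube n \<psi>)) \<psi>"
    unfolding box_skel.induced_by_def using box_adj_pres[OF \<psi>(1)] \<psi> by (simp add: COSK_cube_def)
  then show ?thesis unfolding cube_map_def by (rule box_skel.induced_map_eq)
qed

text \<open>The label of a cube is read off its edges: the edge in direction \<open>j\<close> carries the \<open>j\<close>-th letter.\<close>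

lemma cosk_cells_box_lab_eqI:
  assumes x: "x \<in> cosk_cells box K (box_lab w) (bang \<Sigma>) n"
    and x': "x' \<in> cosk_cells box K (box_lab w) (bang \<Sigma>) n" and f: "fst x = fst x'"
  shows "snd x = snd x'"
proof (rule nth_equalityI)
  have s: "snd x \<in> cells (bang \<Sigma>) n" "snd x' \<in> cells (bang \<Sigma>) n"
    using cosk_cellsD(1)[OF x] cosk_cellsD(1)[OF x'] by auto
  then show "length (snd x) = length (snd x')" by simp
  fix j assume "j < length (snd x)"
  with s have jn: "j < n" by simp
  define e where "e = edge (replicate j False) (replicate (n - 1 - j) False)"
  have eb: "e \<in> box" "cod_c e = n" "dom_c e = 1" using edge_in_box jn by (auto simp: e_def)
  have "length (snd x) = length (replicate j False) + 1 + length (replicate (n - 1 - j) False)"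
    "length (snd x') = length (replicate j False) + 1 + length (replicate (n - 1 - j) False)"
    using s jn by auto
  then have "bang_act e (snd x) = [snd x ! j]" "bang_act e (snd x') = [snd x' ! j]"
    unfolding e_def by (simp_all only: bang_act_edge length_replicate)
  moreover have "box_lab w 1 (fst x e) = bang_act e (snd x)" "box_lab w 1 (fst x' e) = bang_act e (snd x')"
    using cosk_cellsD(3)[OF x eb(1,2)] cosk_cellsD(3)[OF x' eb(1,2)] eb by simp_all
  ultimately show "snd x ! j = snd x' ! j" using f by simp
qed

lemma COSK_cells_eqI:
  assumes x: "x \<in> COSK_cells n" and x': "x' \<in> COSK_cells n" and e: "cube_map n x = cube_map n x'"
  shows "x = x'"
proof -
  let ?K = "trunc1 (box_cube p)"
  have xc: "x \<in> cosk_cells box ?K (box_lab a) (bang \<Sigma>) n"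
    and xc': "x' \<in> cosk_cells box ?K (box_lab a) (bang \<Sigma>) n"
    using x x' mem_COSK_cells by blast+
  have q: "box_skel.induced_by n (fst x) (cube_map n x)" "box_skel.induced_by n (fst x') (cube_map n x')"
    using induced_by_cube_map x x' by auto
  have f: "fst x = fst x'"
  proof
    fix \<phi>
    show "fst x \<phi> = fst x' \<phi>"
    proof (cases "\<phi> \<in> box \<and> cod_c \<phi> = n \<and> dom_c \<phi> \<le> 1")
      case True
      then show ?thesis using q e unfolding box_skel.induced_by_def by simp
    next
      case False
      then show ?thesis using cosk_cellsD(2)[OF xc] cosk_cellsD(2)[OF xc'] by simp
    qed
  qed
  with cosk_cells_box_lab_eqI[OF xc xc'] show ?thesis by (simp add: prod_eq_iff)
qed

lemma COSK_cube_cube_map: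
  assumes x: "x \<in> COSK_cells n"
  shows "COSK_cube n (cube_map n x) = x"
proof -
  have g: "cube_map n x \<in> box" "dom_c (cube_map n x) = n" "cod_c (cube_map n x) = p"
    using cube_map_in_box[OF x] cube_map_dom_cod[OF x] by auto
  show ?thesis using COSK_cells_eqI[OF COSK_cube_in_COSK_cells[OF g] x] cube_map_COSK_cube[OF g] by simp
qed

lemma act_COSK_box_cube:
  assumes \<psi>: "\<psi> \<in> box" and x: "x \<in> COSK_cells (cod_c \<psi>)"
  shows "act (COSK_box \<Sigma> a) \<psi> x = COSK_cube (dom_c \<psi>) (comp_c (cube_map (cod_c \<psi>) x) \<psi>)"
proof -
  let ?g = "cube_map (cod_c \<psi>) x"
  have g: "?g \<in> box" "dom_c ?g = cod_c \<psi>" "cod_c ?g = p"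
    using cube_map_in_box[OF x] cube_map_dom_cod[OF x] by auto
  have xx: "x = COSK_cube (cod_c \<psi>) ?g" using COSK_cube_cube_map[OF x] by simp
  have "(if \<phi> \<in> box \<and> cod_c \<phi> = dom_c \<psi> \<and> dom_c \<phi> \<le> 1 then fst x (comp_c \<psi> \<phi>) else undefined)
     = (if \<phi> \<in> box \<and> cod_c \<phi> = dom_c \<psi> \<and> dom_c \<phi> \<le> 1 then comp_c (comp_c ?g \<psi>) \<phi> else undefined)"
    for \<phi>
  proof (cases "\<phi> \<in> box \<and> cod_c \<phi> = dom_c \<psi> \<and> dom_c \<phi> \<le> 1")
    case True
    then have "comp_c \<psi> \<phi> \<in> box" using box_comp_c[OF \<psi>] by simp
    then have "fst x (comp_c \<psi> \<phi>) = comp_c ?g (comp_c \<psi> \<phi>)"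
      using True by (subst xx) (simp add: COSK_cube_def)
    also have "\<dots> = comp_c (comp_c ?g \<psi>) \<phi>" using comp_c_assoc[OF box_wf_map] True g by simp
    finally show ?thesis using True by simp
  next
    case False
    show ?thesis unfolding if_not_P[OF False] ..
  qed
  moreover have "bang_act \<psi> (snd x) = bang_act (comp_c ?g \<psi>) a"
    using bang_act_comp_c[OF g(1) box_wf_map[OF \<psi>], of a] g by (subst xx) (simp add: COSK_cube_def)
  ultimately show ?thesis unfolding act_COSK_box cosk_act_def COSK_cube_def by simp
qed

lemma act_COSK_box_closed:
  assumes \<psi>: "\<psi> \<in> box" and x: "x \<in> COSK_cells (cod_c \<psi>)"
  shows "act (COSK_box \<Sigma> a) \<psi> x \<in> COSK_cells (dom_c \<psi>)"
    and "cube_map (dom_c \<psi>) (act (COSK_box \<Sigma> a) \<psi> x) = comp_c (cube_map (cod_c \<psi>) x) \<psi>"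
proof -
  have "comp_c (cube_map (cod_c \<psi>) x) \<psi> \<in> box"
    using box_comp_c[OF cube_map_in_box[OF x] \<psi>] cube_map_dom_cod[OF x] by simp
  then show "act (COSK_box \<Sigma> a) \<psi> x \<in> COSK_cells (dom_c \<psi>)"
    and "cube_map (dom_c \<psi>) (act (COSK_box \<Sigma> a) \<psi> x) = comp_c (cube_map (cod_c \<psi>) x) \<psi>"
    using act_COSK_box_cube[OF \<psi> x] COSK_cube_in_COSK_cells cube_map_COSK_cube cube_map_dom_cod[OF x] by simp_all
qed

lemma LA_COSK_box_lps_iso:
  assumes A: "cat_of_cubes A"
  shows "lps_iso A (LA A (COSK_box \<Sigma> a)) (LA_lab A \<Sigma> cosk_lab)
                   (LA A (box_cube p)) (LA_lab A \<Sigma> (box_lab a))"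
proof (rule LA_lps_iso[OF A])
  show N: "box_natural (COSK_box \<Sigma> a) (box_cube p) cube_map"
    unfolding box_natural_def using cube_map_in_box cube_map_dom_cod act_COSK_box_closed(2) by simp
  show "bij_betw (cube_map n) (COSK_cells n) (cells (box_cube p) n)" for n
  proof (rule bij_betw_byWitness[where f'="COSK_cube n"])
    show "\<forall>x\<in>COSK_cells n. COSK_cube n (cube_map n x) = x" using COSK_cube_cube_map by blast
    show "\<forall>\<psi>\<in>cells (box_cube p) n. cube_map n (COSK_cube n \<psi>) = \<psi>" using cube_map_COSK_cube by auto
    show "cube_map n ` COSK_cells n \<subseteq> cells (box_cube p) n" using N unfolding box_natural_def by blast
    show "COSK_cube n ` cells (box_cube p) n \<subseteq> COSK_cells n" using COSK_cube_in_COSK_cells by auto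
  qed
  show "act (COSK_box \<Sigma> a) \<psi> x \<in> COSK_cells (dom_c \<psi>)" if "\<psi> \<in> box" "x \<in> COSK_cells (cod_c \<psi>)" for \<psi> x
    using act_COSK_box_closed(1)[OF that] .
  show "box_natural (COSK_box \<Sigma> a) (bang \<Sigma>) cosk_lab"
    unfolding box_natural_def
  proof (intro conjI allI ballI)
    fix n x assume "x \<in> COSK_cells n"
    then show "cosk_lab n x \<in> cells (bang \<Sigma>) n"
      unfolding mem_COSK_cells cosk_lab_def using cosk_cellsD(1) by blast
  qed (simp add: act_COSK_box cosk_act_def cosk_lab_def)
  show "box_natural (box_cube p) (bang \<Sigma>) (box_lab a)" using box_natural_box_lab a by blast
  show "box_lab a n (cube_map n x) = cosk_lab n x" if "x \<in> COSK_cells n" for n x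
  proof -
    have "snd x = snd (COSK_cube n (cube_map n x))" using COSK_cube_cube_map[OF that] by simp
    then show ?thesis by (simp add: COSK_cube_def box_lab_def cosk_lab_def)
  qed
qed

end

section \<open>The labelled coskeleton of \<open>A[a\<^sub>1, \<dots>, a\<^sub>p]\<close>\<close>

locale cosk_of_rep = directed_cosk \<Sigma> a for \<Sigma> :: "'s set" and a :: "'s list" +
  fixes A :: "cmap set"
  assumes cat: "cat_of_cubes A"
begin

abbreviation "rep_le1 \<equiv> trunc1 (LA A (box_cube p))"
abbreviation "rep_lab \<equiv> LA_lab A \<Sigma> (box_lab a)"
abbreviation "cosk_rep \<equiv> cosk A rep_le1 rep_lab (ShL A \<Sigma>)"

sublocale rep_skel: cube_skeleton A rep_le1 "rep_cube A p" p
proof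
  fix k :: nat assume "k \<le> 1"
  then show "cells rep_le1 k = rep_cube A p ` {\<psi> \<in> box. dom_c \<psi> = k \<and> cod_c \<psi> = p}"
    using cells_LA_box_cube[OF cat] cat_of_cubes_low_maps[OF cat] by simp
next
  show "inj_on (rep_cube A p) {\<psi> \<in> box. dom_c \<psi> \<le> 1 \<and> cod_c \<psi> = p}"
    by (rule inj_onI) (use rep_cube_inj[OF cat] box_wf_map in auto)
next
  fix \<delta> \<psi> assume "\<delta> \<in> A" "\<psi> \<in> box" "dom_c \<psi> \<le> 1" "cod_c \<psi> = p" "cod_c \<delta> = dom_c \<psi>"
  then show "act rep_le1 \<delta> (rep_cube A p \<psi>) = rep_cube A p (comp_c \<psi> \<delta>)"
    using act_rep_cube[OF cat] cat_of_cubes_boxD[OF cat] by simp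
qed (rule cat)

definition rep_label :: "cmap \<Rightarrow> (nat \<times> 's list \<times> cmap) set set" where
  "rep_label g = sh_class A (LA A (bang \<Sigma>)) (dom_c g) (LA_class A (bang \<Sigma>) (p, a, g))"

lemma rep_lab_rep_cube: "rep_lab (dom_c g) (rep_cube A p g) = rep_label g"
  unfolding rep_label_def using LA_lab_rep_cube[OF refl a] by blast

lemma rep_label_in_cells: "g \<in> A \<Longrightarrow> cod_c g = p \<Longrightarrow> rep_label g \<in> cells (ShL A \<Sigma>) (dom_c g)"
  unfolding rep_label_def ShL_def cells_sh cells_LA using a by (auto simp: LA_elems_def)

lemma act_rep_label:
  assumes g: "g \<in> A" "cod_c g = p" and f: "f \<in> A" "dom_c g = cod_c f"
  shows "act (ShL A \<Sigma>) f (rep_label g) = rep_label (comp_c g f)"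
proof -
  have el: "(p, a, g) \<in> LA_elems A (bang \<Sigma>) (cod_c f)" using g a f by (simp add: LA_elems_def)
  then have "LA_class A (bang \<Sigma>) (p, a, g) \<in> cells (LA A (bang \<Sigma>)) (cod_c f)" using cells_LA by blast
  then have "act (ShL A \<Sigma>) f (rep_label g) =
             sh_class A (LA A (bang \<Sigma>)) (dom_c f) (act (LA A (bang \<Sigma>)) f (LA_class A (bang \<Sigma>) (p, a, g)))"
    unfolding rep_label_def ShL_def using act_sh_class[OF f(1)] f(2) by simp
  then show ?thesis unfolding rep_label_def act_LA_class(1)[OF cat f(1) el] by simp
qed

definition rep_skeleton :: "nat \<Rightarrow> cmap \<Rightarrow> cmap \<Rightarrow> (nat \<times> cmap \<times> cmap) set" where
  "rep_skeleton n g = (\<lambda>\<phi>. if \<phi> \<in> A \<and> cod_c \<phi> = n \<and> dom_c \<phi> \<le> 1 then rep_cube A p (comp_c g \<phi>) else undefined)"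

lemma induced_by_rep_skeleton:
  "adj_pres g \<Longrightarrow> dom_c g = n \<Longrightarrow> cod_c g = p \<Longrightarrow> rep_skel.induced_by n (rep_skeleton n g) g"
  unfolding rep_skel.induced_by_def rep_skeleton_def by simp

lemma rep_skeleton_in_cosk_cells:
  assumes g: "adj_pres g" "dom_c g = n" "cod_c g = p" and s: "s \<in> cells (ShL A \<Sigma>) n"
    and lab: "\<And>\<phi>. \<phi> \<in> A \<Longrightarrow> cod_c \<phi> = n \<Longrightarrow> dom_c \<phi> \<le> 1 \<Longrightarrow>
                rep_label (comp_c g \<phi>) = act (ShL A \<Sigma>) \<phi> s"
  shows "(rep_skeleton n g, s) \<in> cells cosk_rep n"
proof -
  have U: "rep_skel.skeleton_map n (\<lambda>\<phi>. rep_cube A p (comp_c g \<phi>))"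
    using rep_skel.skeleton_map_comp_c[OF g] .
  show ?thesis
    unfolding cosk_simps cosk_cells_def
  proof (simp only: mem_Collect_eq split_conv, intro conjI allI ballI impI)
    fix \<phi> assume "\<not> (\<phi> \<in> A \<and> cod_c \<phi> = n \<and> dom_c \<phi> \<le> 1)"
    then show "rep_skeleton n g \<phi> = undefined" unfolding rep_skeleton_def by (rule if_not_P)
  next
    fix \<phi> assume h: "\<phi> \<in> A" "cod_c \<phi> = n" "dom_c \<phi> \<le> 1"
    show "rep_skeleton n g \<phi> \<in> cells rep_le1 (dom_c \<phi>)"
      using U h unfolding rep_skel.skeleton_map_def rep_skeleton_def by simp
    show "rep_lab (dom_c \<phi>) (rep_skeleton n g \<phi>) = act (ShL A \<Sigma>) \<phi> s"
      using rep_lab_rep_cube[of "comp_c g \<phi>"] lab[OF h] h unfolding rep_skeleton_def by simp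
  next
    fix \<delta> \<phi> assume h: "\<delta> \<in> A" "\<phi> \<in> A" "dom_c \<delta> \<le> 1" "cod_c \<delta> = dom_c \<phi>" "dom_c \<phi> \<le> 1" "cod_c \<phi> = n"
    then have "comp_c \<phi> \<delta> \<in> A" using cat_of_cubes_comp_c[OF cat h(1) h(2)] by simp
    then show "rep_skeleton n g (comp_c \<phi> \<delta>) = act rep_le1 \<delta> (rep_skeleton n g \<phi>)"
      using U h unfolding rep_skel.skeleton_map_def rep_skeleton_def by simp
  qed (rule s)
qed

definition cosk_cube_of_map :: "cmap \<Rightarrow> (cmap \<Rightarrow> (nat \<times> cmap \<times> cmap) set) \<times> (nat \<times> 's list \<times> cmap) set set" where
  "cosk_cube_of_map g = (rep_skeleton (dom_c g) g, rep_label g)"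

lemma cosk_cube_of_map_in_cells:
  assumes g: "g \<in> A" "dom_c g = n" "cod_c g = p"
  shows "cosk_cube_of_map g \<in> cells cosk_rep n"
  unfolding cosk_cube_of_map_def g(2)
proof (rule rep_skeleton_in_cosk_cells)
  show "adj_pres g" using cat_of_cubes_adj_pres[OF cat g(1)] .
  show "rep_label g \<in> cells (ShL A \<Sigma>) n" using rep_label_in_cells[OF g(1,3)] g(2) by simp
  fix \<phi> assume "\<phi> \<in> A" "cod_c \<phi> = n" "dom_c \<phi> \<le> 1"
  then show "rep_label (comp_c g \<phi>) = act (ShL A \<Sigma>) \<phi> (rep_label g)"
    using act_rep_label[OF g(1,3)] g(2) by simp
qed (use g in simp_all)

lemma cosk_rep_cell_eq:
  assumes x: "x \<in> cells cosk_rep n"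
  defines "g \<equiv> rep_skel.induced_map n (fst x)"
  shows "rep_skel.induced_by n (fst x) g" and "fst x = rep_skeleton n g"
proof -
  have xc: "x \<in> cosk_cells A rep_le1 rep_lab (ShL A \<Sigma>) n" using x by simp
  show q: "rep_skel.induced_by n (fst x) g"
    unfolding g_def using rep_skel.cosk_cells_skeleton_map[OF xc] by (rule rep_skel.induced_by_induced_map)
  show "fst x = rep_skeleton n g"
  proof
    fix \<phi>
    show "fst x \<phi> = rep_skeleton n g \<phi>"
    proof (cases "\<phi> \<in> A \<and> cod_c \<phi> = n \<and> dom_c \<phi> \<le> 1")
      case True
      then show ?thesis using q unfolding rep_skel.induced_by_def rep_skeleton_def by simp
    next
      case False
      then show ?thesis unfolding rep_skeleton_def if_not_P[OF False] using cosk_cellsD(2)[OF xc] by blast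
    qed
  qed
qed

lemma cosk_rep_cell_eq_cosk_cube_of_map:
  assumes x: "x \<in> cells cosk_rep n" and gA: "rep_skel.induced_map n (fst x) \<in> A"
  shows "x = cosk_cube_of_map (rep_skel.induced_map n (fst x))"
proof -
  let ?g = "rep_skel.induced_map n (fst x)"
  have g: "adj_pres ?g" "dom_c ?g = n" "cod_c ?g = p"
    using cosk_rep_cell_eq(1)[OF x] unfolding rep_skel.induced_by_def by auto
  have xc: "x \<in> cosk_cells A rep_le1 rep_lab (ShL A \<Sigma>) n" using x by simp
  have "snd x = rep_label ?g"
  proof (rule ShL_cell_eqI[OF cat])
    show "snd x \<in> cells (ShL A \<Sigma>) n" using cosk_cellsD(1)[OF xc] .
    show "rep_label ?g \<in> cells (ShL A \<Sigma>) n" using rep_label_in_cells[OF gA g(3)] g by simp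
    fix \<phi> assume \<phi>: "\<phi> \<in> A" "cod_c \<phi> = n" "dom_c \<phi> \<le> 1"
    have "act (ShL A \<Sigma>) \<phi> (snd x) = rep_lab (dom_c \<phi>) (fst x \<phi>)" using cosk_cellsD(3)[OF xc \<phi>] by simp
    also have "fst x \<phi> = rep_skeleton n ?g \<phi>" using cosk_rep_cell_eq(2)[OF x] by (rule fun_cong)
    also have "\<dots> = rep_cube A p (comp_c ?g \<phi>)" using \<phi> unfolding rep_skeleton_def by simp
    also have "rep_lab (dom_c \<phi>) (rep_cube A p (comp_c ?g \<phi>)) = rep_label (comp_c ?g \<phi>)"
      using rep_lab_rep_cube[of "comp_c ?g \<phi>"] by simp
    also have "\<dots> = act (ShL A \<Sigma>) \<phi> (rep_label ?g)" using act_rep_label[OF gA g(3) \<phi>(1)] \<phi> g by simp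
    finally show "act (ShL A \<Sigma>) \<phi> (snd x) = act (ShL A \<Sigma>) \<phi> (rep_label ?g)" .
  qed
  then show ?thesis using cosk_rep_cell_eq(2)[OF x] g by (simp add: prod_eq_iff cosk_cube_of_map_def)
qed

lemma act_cosk_cube_of_map:
  assumes g: "g \<in> A" "cod_c g = p" and f: "f \<in> A" "dom_c g = cod_c f"
  shows "act cosk_rep f (cosk_cube_of_map g) = cosk_cube_of_map (comp_c g f)"
proof -
  have "(\<lambda>\<phi>. if \<phi> \<in> A \<and> cod_c \<phi> = dom_c f \<and> dom_c \<phi> \<le> 1 then rep_skeleton (dom_c g) g (comp_c f \<phi>)
          else undefined) = rep_skeleton (dom_c f) (comp_c g f)"
  proof
    fix \<phi>
    show "(if \<phi> \<in> A \<and> cod_c \<phi> = dom_c f \<and> dom_c \<phi> \<le> 1 then rep_skeleton (dom_c g) g (comp_c f \<phi>)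
          else undefined) = rep_skeleton (dom_c f) (comp_c g f) \<phi>"
    proof (cases "\<phi> \<in> A \<and> cod_c \<phi> = dom_c f \<and> dom_c \<phi> \<le> 1")
      case True
      then have "comp_c f \<phi> \<in> A" using cat_of_cubes_comp_c[OF cat _ f(1)] by simp
      moreover have "comp_c g (comp_c f \<phi>) = comp_c (comp_c g f) \<phi>"
        using comp_c_assoc[OF cat_of_cubes_wf_map[OF cat]] True by simp
      ultimately show ?thesis using True f by (simp add: rep_skeleton_def)
    next
      case False
      then have "rep_skeleton (dom_c f) (comp_c g f) \<phi> = undefined"
        unfolding rep_skeleton_def by (rule if_not_P)
      then show ?thesis by (simp only: if_not_P[OF False])
    qed
  qed
  then show ?thesis
    using act_rep_label[OF g f] unfolding cosk_simps cosk_act_def cosk_cube_of_map_def fst_conv snd_conv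
    by simp
qed

lemma rep_skeleton_inj:
  "adj_pres g \<Longrightarrow> adj_pres g' \<Longrightarrow> dom_c g = n \<Longrightarrow> dom_c g' = n \<Longrightarrow> cod_c g = p \<Longrightarrow> cod_c g' = p \<Longrightarrow>
   rep_skeleton n g = rep_skeleton n g' \<Longrightarrow> g = g'"
  using induced_by_rep_skeleton rep_skel.induced_by_unique by metis

lemma bij_betw_cosk_cube_of_map:
  assumes all: "\<And>g. adj_pres g \<Longrightarrow> g \<in> A"
  shows "bij_betw cosk_cube_of_map {f \<in> A. dom_c f = n \<and> cod_c f = p} (cells cosk_rep n)"
proof (rule bij_betw_imageI)
  show "inj_on cosk_cube_of_map {f \<in> A. dom_c f = n \<and> cod_c f = p}"
    using rep_skeleton_inj cat_of_cubes_adj_pres[OF cat]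
    by (intro inj_onI) (auto simp: cosk_cube_of_map_def)
  show "cosk_cube_of_map ` {f \<in> A. dom_c f = n \<and> cod_c f = p} = cells cosk_rep n"
  proof
    show "cosk_cube_of_map ` {f \<in> A. dom_c f = n \<and> cod_c f = p} \<subseteq> cells cosk_rep n"
      using cosk_cube_of_map_in_cells by blast
    show "cells cosk_rep n \<subseteq> cosk_cube_of_map ` {f \<in> A. dom_c f = n \<and> cod_c f = p}"
    proof
      fix x assume x: "x \<in> cells cosk_rep n"
      with all have "rep_skel.induced_map n (fst x) \<in> {f \<in> A. dom_c f = n \<and> cod_c f = p}"
        using cosk_rep_cell_eq(1)[OF x] unfolding rep_skel.induced_by_def by auto
      with x all show "x \<in> cosk_cube_of_map ` {f \<in> A. dom_c f = n \<and> cod_c f = p}"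
        using cosk_rep_cell_eq_cosk_cube_of_map by blast
    qed
  qed
qed

lemma rep_cosk_lps_iso:
  assumes all: "\<And>g. adj_pres g \<Longrightarrow> g \<in> A"
  shows "lps_iso A (LA A (box_cube p)) rep_lab cosk_rep cosk_lab"
proof -
  define F where "F n = {f \<in> A. dom_c f = n \<and> cod_c f = p}" for n
  define h where "h n C = cosk_cube_of_map (inv_into (F n) (rep_cube A p) C)" for n C
  have h_rep: "h n (rep_cube A p g) = cosk_cube_of_map g" if "g \<in> F n" for n g
  proof -
    have "inv_into (F n) (rep_cube A p) (rep_cube A p g) = g"
      unfolding F_def using bij_betw_inv_into_left[OF bij_betw_rep_cube[OF cat]] that F_def by blast
    then show ?thesis unfolding h_def by simp
  qed
  have "bij_betw (h n) (cells (LA A (box_cube p)) n) (cells cosk_rep n)" for n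
    unfolding h_def F_def
    using bij_betw_trans[OF bij_betw_inv_into[OF bij_betw_rep_cube[OF cat]] bij_betw_cosk_cube_of_map[OF all]]
    by (simp add: comp_def)
  moreover have "h (dom_c f) (act (LA A (box_cube p)) f C) = act cosk_rep f (h (cod_c f) C)"
    if f: "f \<in> A" and C: "C \<in> cells (LA A (box_cube p)) (cod_c f)" for f C
  proof -
    obtain g where g: "g \<in> F (cod_c f)" "C = rep_cube A p g"
      using C cells_LA_box_cube[OF cat] F_def by auto
    then have gg: "g \<in> A" "dom_c g = cod_c f" "cod_c g = p" unfolding F_def by auto
    have "comp_c g f \<in> F (dom_c f)" using cat_of_cubes_comp_c[OF cat f gg(1)] gg F_def by simp
    then show ?thesis
      using g(2) h_rep[OF g(1)] act_rep_cube[OF cat f gg(1,2,3)] act_cosk_cube_of_map[OF gg(1,3) f gg(2)]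
      by (simp add: h_rep)
  qed
  moreover have "cosk_lab n (h n C) = rep_lab n C" if C: "C \<in> cells (LA A (box_cube p)) n" for n C
  proof -
    obtain g where g: "g \<in> F n" "C = rep_cube A p g" using C cells_LA_box_cube[OF cat] F_def by auto
    then show ?thesis
      using h_rep[OF g(1)] rep_lab_rep_cube[of g] unfolding F_def
      by (auto simp: cosk_lab_def cosk_cube_of_map_def)
  qed
  ultimately show ?thesis unfolding lps_iso_def by blast
qed

text \<open>For a constant word \<open>a = t\<^sup>p\<close> all cubes of dimension \<open>\<le> 1\<close> of \<open>A[a]\<close> carry the constant
  label, so every adjacency-preserving \<open>g : [n] \<rightarrow> [p]\<close>, in \<open>A\<close> or not, yields a cube of the
  coskeleton.\<close>

definition const_label :: "'s \<Rightarrow> nat \<Rightarrow> (nat \<times> 's list \<times> cmap) set set" where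
  "const_label t n = sh_class A (LA A (bang \<Sigma>)) n (LA_class A (bang \<Sigma>) (n, replicate n t, idc n))"

lemma LA_class_replicate:
  assumes t: "t \<in> \<Sigma>" and e: "e \<in> box" "dom_c e = k" "cod_c e = m"
  shows "LA_class A (bang \<Sigma>) (m, replicate m t, e) = LA_class A (bang \<Sigma>) (k, replicate k t, idc k)"
proof -
  have "((k, act (bang \<Sigma>) e (replicate m t), idc k), (cod_c e, replicate m t, comp_c e (idc k)))
          \<in> LA_gen A (bang \<Sigma>)"
    by (rule LA_genI) (use e t cat_of_cubes_idc[OF cat] in auto)
  moreover have "act (bang \<Sigma>) e (replicate m t) = replicate k t"
    using length_bang_act[OF e(1), of "replicate m t"] set_bang_act[of "replicate m t" e] e
    by (intro replicate_eqI) auto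
  moreover have "comp_c e (idc k) = e" using comp_c_idc_right[OF box_wf_map[OF e(1)]] e by simp
  ultimately have "((k, replicate k t, idc k), (m, replicate m t, e)) \<in> LA_rel A (bang \<Sigma>)"
    using LA_gen_in_LA_rel e by simp
  then show ?thesis using LA_class_eq_iff LA_rel_sym by metis
qed

lemma const_label_in_cosk_rep_cells:
  assumes t: "t \<in> \<Sigma>" and ar: "a = replicate p t" and g: "adj_pres g" "dom_c g = n" "cod_c g = p"
  shows "(rep_skeleton n g, const_label t n) \<in> cells cosk_rep n"
proof (rule rep_skeleton_in_cosk_cells[OF g])
  let ?X = "LA A (bang \<Sigma>)"
  have el: "(n, replicate n t, idc n) \<in> LA_elems A (bang \<Sigma>) n"
    using t cat_of_cubes_idc[OF cat] by (auto simp: LA_elems_def)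
  then have c: "LA_class A (bang \<Sigma>) (n, replicate n t, idc n) \<in> cells ?X n" using cells_LA by blast
  then show "const_label t n \<in> cells (ShL A \<Sigma>) n" unfolding const_label_def ShL_def cells_sh by blast
  fix \<phi> assume \<phi>: "\<phi> \<in> A" "cod_c \<phi> = n" "dom_c \<phi> \<le> 1"
  let ?d = "dom_c \<phi>"
  have "comp_c g \<phi> \<in> box" "\<phi> \<in> box"
    using cat_of_cubes_comp_low[OF cat g(1) \<phi>(1)] adj_pres_dom_le_1_in_box cat_of_cubes_adj_pres[OF cat \<phi>(1)]
      \<phi> g by simp_all
  then have classes: "LA_class A (bang \<Sigma>) (p, replicate p t, comp_c g \<phi>) = LA_class A (bang \<Sigma>) (?d, replicate ?d t, idc ?d)"
    "LA_class A (bang \<Sigma>) (n, replicate n t, \<phi>) = LA_class A (bang \<Sigma>) (?d, replicate ?d t, idc ?d)"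
    using LA_class_replicate[OF t] \<phi> g by simp_all
  have "act (ShL A \<Sigma>) \<phi> (const_label t n) = sh_class A ?X ?d (act ?X \<phi> (LA_class A (bang \<Sigma>) (n, replicate n t, idc n)))"
    unfolding const_label_def ShL_def using act_sh_class[OF \<phi>(1)] c \<phi>(2) by metis
  also have "act ?X \<phi> (LA_class A (bang \<Sigma>) (n, replicate n t, idc n)) = LA_class A (bang \<Sigma>) (n, replicate n t, \<phi>)"
    using act_LA_class(1)[OF cat \<phi>(1) el[folded \<phi>(2)]] \<phi>(2)
      comp_c_idc_left[OF cat_of_cubes_wf_map[OF cat \<phi>(1)] \<phi>(2)] by simp
  finally show "rep_label (comp_c g \<phi>) = act (ShL A \<Sigma>) \<phi> (const_label t n)"
    unfolding rep_label_def using classes ar \<phi> by simp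
qed

lemma lps_iso_bij_betw_cells: "lps_iso B X lX Y lY \<Longrightarrow> \<exists>h. bij_betw h (cells X n) (cells Y n)"
  unfolding lps_iso_def by blast

lemma no_cosk_lps_iso_if_missing_map:
  assumes t: "t \<in> \<Sigma>" and ar: "a = replicate p t"
    and f: "adj_pres f" "dom_c f = n" "cod_c f = p" "f \<notin> A"
    and iso: "lps_iso A (LA A (COSK_box \<Sigma> a)) (LA_lab A \<Sigma> cosk_lab) cosk_rep cosk_lab"
  shows False
proof -
  define FA where "FA = {g \<in> A. dom_c g = n \<and> cod_c g = p}"
  define FH where "FH = {g. adj_pres g \<and> dom_c g = n \<and> cod_c g = p}"
  obtain h1 where h1: "bij_betw h1 (cells (LA A (COSK_box \<Sigma> a)) n) (cells cosk_rep n)"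
    using lps_iso_bij_betw_cells[OF iso] by blast
  obtain h2 where h2: "bij_betw h2 (cells (LA A (COSK_box \<Sigma> a)) n) (cells (LA A (box_cube p)) n)"
    using lps_iso_bij_betw_cells[OF LA_COSK_box_lps_iso[OF cat]] by blast
  have "bij_betw (inv_into FA (rep_cube A p) \<circ> (h2 \<circ> inv_into (cells (LA A (COSK_box \<Sigma> a)) n) h1))
          (cells cosk_rep n) FA"
    unfolding FA_def
    by (rule bij_betw_trans[OF bij_betw_trans[OF bij_betw_inv_into[OF h1] h2]
          bij_betw_inv_into[OF bij_betw_rep_cube[OF cat]]])
  then obtain \<beta> where \<beta>: "bij_betw \<beta> (cells cosk_rep n) FA" by blast
  define \<iota> where "\<iota> g = (rep_skeleton n g, const_label t n)" for g
  have \<iota>: "\<iota> ` FH \<subseteq> cells cosk_rep n"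
    using const_label_in_cosk_rep_cells[OF t ar] unfolding \<iota>_def FH_def by blast
  have "inj_on \<iota> FH"
    using rep_skeleton_inj unfolding \<iota>_def FH_def by (intro inj_onI) auto
  then have "inj_on (\<beta> \<circ> \<iota>) FH"
    using comp_inj_on inj_on_subset[OF bij_betw_imp_inj_on[OF \<beta>] \<iota>] by blast
  moreover have "(\<beta> \<circ> \<iota>) ` FH \<subseteq> FA" using \<iota> bij_betw_imp_surj_on[OF \<beta>] by auto
  moreover have finH: "finite FH"
    by (rule finite_subset[OF _ finite_wf_maps[of n p]]) (auto simp: FH_def adj_pres_def)
  moreover have "FA \<subset> FH" using f cat_of_cubes_adj_pres[OF cat] unfolding FA_def FH_def by auto
  ultimately show False
    using card_inj_on_le[of "\<beta> \<circ> \<iota>" FH FA] psubset_card_mono[of FH FA] finite_subset by fastforce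
qed

end

lemma hat_box_lps_isos:
  assumes "set a \<subseteq> \<Sigma>"
  shows "lps_iso hat_box (LA hat_box (COSK_box \<Sigma> a)) (LA_lab hat_box \<Sigma> cosk_lab)
           (LA hat_box (box_cube (length a))) (LA_lab hat_box \<Sigma> (box_lab a))"
    and "lps_iso hat_box (LA hat_box (box_cube (length a))) (LA_lab hat_box \<Sigma> (box_lab a))
           (cosk hat_box (trunc1 (LA hat_box (box_cube (length a)))) (LA_lab hat_box \<Sigma> (box_lab a))
             (ShL hat_box \<Sigma>)) cosk_lab"
proof -
  interpret cosk_of_rep \<Sigma> a hat_box using assms cat_of_cubes_hat_box by unfold_locales
  show "lps_iso hat_box (LA hat_box (COSK_box \<Sigma> a)) (LA_lab hat_box \<Sigma> cosk_lab)
          (LA hat_box (box_cube (length a))) (LA_lab hat_box \<Sigma> (box_lab a))"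
    by (rule LA_COSK_box_lps_iso[OF cat_of_cubes_hat_box])
  show "lps_iso hat_box (LA hat_box (box_cube (length a))) (LA_lab hat_box \<Sigma> (box_lab a))
          cosk_rep cosk_lab"
    by (rule rep_cosk_lps_iso) (simp add: hat_box_def)
qed

text \<open>The word \<open>\<tau>\<^sup>p\<close> used below has \<open>p \<ge> 1\<close>: the only map into \<open>[0]\<close> is the identity.\<close>

lemma eq_hat_box_if_cosk_lps_isos:
  assumes t: "\<tau> \<in> \<Sigma>" and A: "cat_of_cubes A"
    and iso: "\<And>a. length a \<ge> 1 \<Longrightarrow> set a \<subseteq> \<Sigma> \<Longrightarrow>
                lps_iso A (LA A (COSK_box \<Sigma> a)) (LA_lab A \<Sigma> cosk_lab)
                  (cosk A (trunc1 (LA A (box_cube (length a)))) (LA_lab A \<Sigma> (box_lab a)) (ShL A \<Sigma>))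
                  cosk_lab"
  shows "A = hat_box"
proof (rule ccontr)
  assume "A \<noteq> hat_box"
  moreover have "A \<subseteq> hat_box" using cat_of_cubes_adj_pres[OF A] hat_box_def by blast
  ultimately obtain f where f: "adj_pres f" "f \<notin> A" using hat_box_def by blast
  have "cod_c f \<ge> 1"
  proof (rule ccontr)
    assume "\<not> cod_c f \<ge> 1"
    then have "dom_c f = 0" "cod_c f = 0" using adj_pres_dom_le_cod[OF f(1)] by simp_all
    moreover have "wf_map f" using f(1) adj_pres_def by blast
    ultimately have "f = idc 0"
      using length_fun_c[of f "[]"] by (intro cmap_eqI) (auto simp: wf_map_idc fun_c_idc)
    then show False using f(2) cat_of_cubes_idc[OF A] by simp
  qed
  define a where "a = replicate (cod_c f) \<tau>"
  then have word: "set a \<subseteq> \<Sigma>" "length a = cod_c f" using t by auto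
  interpret cosk_of_rep \<Sigma> a A using word(1) A by unfold_locales
  have "a = replicate (length a) \<tau>" using a_def word(2) by simp
  moreover have "length a \<ge> 1" using word(2) \<open>cod_c f \<ge> 1\<close> by simp
  ultimately show False
    using no_cosk_lps_iso_if_missing_map[OF t _ f(1) refl word(2)[symmetric] f(2) iso] word(1) by blast
qed

theorem theorem7p24:
  fixes \<Sigma> :: "'s set" and \<tau> :: 's
  assumes "\<tau> \<in> \<Sigma>"
  shows "(\<forall>A. cat_of_cubes A \<longrightarrow>
            ((\<forall>a. length a \<ge> 1 \<and> set a \<subseteq> \<Sigma> \<longrightarrow>
                lps_iso A (LA A (COSK_box \<Sigma> a)) (LA_lab A \<Sigma> cosk_lab)
                  (cosk A (trunc1 (LA A (box_cube (length a)))) (LA_lab A \<Sigma> (box_lab a)) (ShL A \<Sigma>))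
                  cosk_lab)
             \<longleftrightarrow> A = hat_box))
      \<and> (\<forall>a. length a \<ge> 1 \<and> set a \<subseteq> \<Sigma> \<longrightarrow>
            lps_iso hat_box (LA hat_box (COSK_box \<Sigma> a)) (LA_lab hat_box \<Sigma> cosk_lab)
              (LA hat_box (box_cube (length a))) (LA_lab hat_box \<Sigma> (box_lab a))
          \<and> lps_iso hat_box
              (cosk hat_box (trunc1 (LA hat_box (box_cube (length a)))) (LA_lab hat_box \<Sigma> (box_lab a)) (ShL hat_box \<Sigma>))
              cosk_lab
              (LA hat_box (box_cube (length a))) (LA_lab hat_box \<Sigma> (box_lab a)))"
proof -
  have "lps_iso hat_box (LA hat_box (COSK_box \<Sigma> a)) (LA_lab hat_box \<Sigma> cosk_lab)
          (cosk hat_box (trunc1 (LA hat_box (box_cube (length a)))) (LA_lab hat_box \<Sigma> (box_lab a))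
            (ShL hat_box \<Sigma>)) cosk_lab"
    and "lps_iso hat_box
          (cosk hat_box (trunc1 (LA hat_box (box_cube (length a)))) (LA_lab hat_box \<Sigma> (box_lab a))
            (ShL hat_box \<Sigma>)) cosk_lab
          (LA hat_box (box_cube (length a))) (LA_lab hat_box \<Sigma> (box_lab a))"
    if "set a \<subseteq> \<Sigma>" for a
    using lps_iso_trans[OF hat_box_lps_isos[OF that]]
      lps_iso_sym[OF hat_box_lps_isos(2)[OF that] act_closed_LA[OF cat_of_cubes_hat_box]] by blast+
  then show ?thesis
    using eq_hat_box_if_cosk_lps_isos[OF assms] hat_box_lps_isos(1) by blast
qed

end
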